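(* Let $A$ be a separable $C^*$-algebra, let $p\in\{0,1,2,\dots\}$, and let $(H,\rho,F)$ be a $p$-graded Fredholm module over $A$, with multigrading operators $\varepsilon_1,\dots,\varepsilon_p$. Assume there exists a self-adjoint, odd-graded involution $E\colon H\to H$ (so $E=E^*$, $E^2=1$) which commutes with $\rho(a)$ for every $a\in A$ and with each $\varepsilon_j$, and which anticommutes with $F$ (i.e. $EF=-FE$). Then the class of $(H,\rho,F)$ is zero in the Kasparov $K$-homology group $K^{-p}(A)$.
   Context: Write $X\sim Y$ for equality of bounded operators modulo compact operators. A Fredholm module over $A$ is a triple $(H,\rho,F)$: a separable Hilbert space $H$, a representation $\rho\colon A\to\mathcal B(H)$ (possibly degenerate or zero), and a bounded operator $F$ with $(F^2-1)\rho(a)\sim0$, $(F-F^* )\rho(a)\sim0$, $F\rho(a)\sim\rho(a)F$ for all $a\in A$. It is $p$-graded if moreover $H=H^+\oplus H^-$ is $\mathbb Z/2$-graded with each $\rho(a)$ even and $F$ odd, and there are odd operators $\varepsilon_1,\dots,\varepsilon_p$ with $\varepsilon_j^*=-\varepsilon_j$, $\varepsilon_j^2=-1$, $\varepsilon_i\varepsilon_j+\varepsilon_j\varepsilon_i=0$ for $i\neq j$, each commuting with $F$ and with every $\rho(a)$. A unitary equivalence of $p$-graded modules is a grading-preserving unitary intertwining $\rho$, $F$ and the $\varepsilon_j$. Two $p$-graded modules $(H,\rho,F_0),(H,\rho,F_1)$ are operator homotopic if there is a norm-continuous path $F_t$, $t\in[0,1]$, with each $(H,\rho,F_t)$ a $p$-graded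 Fredholm module (same $H,\rho$, grading and $\varepsilon_j$). Direct sum is taken componentwise. $K^{-p}(A)$ is the abelian group generated by unitary equivalence classes $[x]$ of $p$-graded Fredholm modules subject to $[x_0]=[x_1]$ when $x_0,x_1$ are operator homotopic and $[x_0\oplus x_1]=[x_0]+[x_1]$. *)

theory Defs
  imports "HOL-Analysis.Analysis" "HOL-Library.Function_Algebras"
begin

text \<open>A C*-algebra is modelled as a type 'a that is a real Banach algebra (not necessarily
unital), together with a complex scalar multiplication scC extending the real one and an
involution st, subject to the usual axioms and the C*-identity.\<close>

definition cstar_algebra ::
  "(complex \<Rightarrow> 'a::{banach,real_normed_algebra} \<Rightarrow> 'a) \<Rightarrow> ('a \<Rightarrow> 'a) \<Rightarrow> bool" where
  "cstar_algebra scC st \<longleftrightarrow>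
     (\<forall>r x. scC (complex_of_real r) x = scaleR r x) \<and>
     (\<forall>c d x. scC (c * d) x = scC c (scC d x)) \<and>
     (\<forall>c d x. scC (c + d) x = scC c x + scC d x) \<and>
     (\<forall>c x y. scC c (x + y) = scC c x + scC c y) \<and>
     (\<forall>c x. norm (scC c x) = cmod c * norm x) \<and>
     (\<forall>c x y. scC c (x * y) = scC c x * y \<and> scC c (x * y) = x * scC c y) \<and>
     (\<forall>x. st (st x) = x) \<and>
     (\<forall>x y. st (x + y) = st x + st y) \<and>
     (\<forall>c x. st (scC c x) = scC (cnj c) (st x)) \<and>
     (\<forall>x y. st (x * y) = st y * st x) \<and>
     (\<forall>x. norm (st x * x) = (norm x)\<^sup>2)"

definition separable_set :: "'a::metric_space set \<Rightarrow> bool" where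
  "separable_set S \<longleftrightarrow> (\<exists>D. countable D \<and> D \<subseteq> S \<and> S \<subseteq> closure D)"

text \<open>Every separable Hilbert space is unitarily isomorphic to a closed subspace of l2(N);
since K-homology is generated by unitary equivalence classes, Hilbert spaces are taken
to be closed subspaces of l2(N). Operators are functions on sequences; only their values
on the relevant subspace H matter.\<close>

type_synonym cseq = "nat \<Rightarrow> complex"
type_synonym op = "cseq \<Rightarrow> cseq"

definition L2 :: "cseq set" where
  "L2 = {x. summable (\<lambda>n. (cmod (x n))\<^sup>2)}"

definition l2inner :: "cseq \<Rightarrow> cseq \<Rightarrow> complex" where
  "l2inner x y = (\<Sum>n. x n * cnj (y n))"

definition l2norm :: "cseq \<Rightarrow> real" where
  "l2norm x = sqrt (\<Sum>n. (cmod (x n))\<^sup>2)"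

definition csc :: "complex \<Rightarrow> cseq \<Rightarrow> cseq" where
  "csc c x = (\<lambda>n. c * x n)"

definition closed_subspace :: "cseq set \<Rightarrow> bool" where
  "closed_subspace H \<longleftrightarrow> H \<subseteq> L2 \<and> 0 \<in> H \<and>
     (\<forall>x\<in>H. \<forall>y\<in>H. x + y \<in> H) \<and> (\<forall>c. \<forall>x\<in>H. csc c x \<in> H) \<and>
     (\<forall>s y. (\<forall>n. s n \<in> H) \<and> y \<in> L2 \<and> (\<lambda>n. l2norm (s n - y)) \<longlonglongrightarrow> 0 \<longrightarrow> y \<in> H)"

definition bounded_on :: "cseq set \<Rightarrow> op \<Rightarrow> bool" where
  "bounded_on H T \<longleftrightarrow> (\<forall>x\<in>H. T x \<in> H) \<and>
     (\<forall>x\<in>H. \<forall>y\<in>H. T (x + y) = T x + T y) \<and>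
     (\<forall>c. \<forall>x\<in>H. T (csc c x) = csc c (T x)) \<and>
     (\<exists>C. \<forall>x\<in>H. l2norm (T x) \<le> C * l2norm x)"

definition adj :: "cseq set \<Rightarrow> op \<Rightarrow> op" where
  "adj H T = (\<lambda>y. THE z. z \<in> H \<and> (\<forall>x\<in>H. l2inner (T x) y = l2inner x z))"

definition compact_on :: "cseq set \<Rightarrow> op \<Rightarrow> bool" where
  "compact_on H T \<longleftrightarrow> (\<forall>s (B::real). (\<forall>n. s n \<in> H \<and> l2norm (s n) \<le> B) \<longrightarrow>
     (\<exists>(r::nat\<Rightarrow>nat) y. strict_mono r \<and> y \<in> H \<and> (\<lambda>n. l2norm (T (s (r n)) - y)) \<longlonglongrightarrow> 0))"

text \<open>Hs: Hilbert space; gam: grading operator (H+ = +1 eigenspace, H- = -1 eigenspace);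
rho: representation; Fop: the operator F; eps: multigrading operators eps_0..eps_(p-1).\<close>
record 'a fmod =
  Hs :: "cseq set"
  gam :: op
  rho :: "'a \<Rightarrow> op"
  Fop :: op
  eps :: "nat \<Rightarrow> op"

definition representation ::
  "(complex \<Rightarrow> 'a::{banach,real_normed_algebra} \<Rightarrow> 'a) \<Rightarrow> ('a \<Rightarrow> 'a) \<Rightarrow> cseq set \<Rightarrow> ('a \<Rightarrow> op) \<Rightarrow> bool" where
  "representation scC st H r \<longleftrightarrow>
     (\<forall>a. bounded_on H (r a)) \<and>
     (\<forall>a b. \<forall>x\<in>H. r (a + b) x = r a x + r b x) \<and>
     (\<forall>c a. \<forall>x\<in>H. r (scC c a) x = csc c (r a x)) \<and>
     (\<forall>a b. \<forall>x\<in>H. r (a * b) x = r a (r b x)) \<and>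
     (\<forall>a. \<forall>x\<in>H. r (st a) x = adj H (r a) x)"

definition pgraded_fmod ::
  "(complex \<Rightarrow> 'a::{banach,real_normed_algebra} \<Rightarrow> 'a) \<Rightarrow> ('a \<Rightarrow> 'a) \<Rightarrow> nat \<Rightarrow> 'a fmod \<Rightarrow> bool" where
  "pgraded_fmod scC st p m \<longleftrightarrow>
     (let H = Hs m; g = gam m; r = rho m; F = Fop m; e = eps m in
     closed_subspace H \<and>
     representation scC st H r \<and>
     bounded_on H F \<and>
     \<comment> \<open>grading\<close>
     bounded_on H g \<and> (\<forall>x\<in>H. g (g x) = x) \<and> (\<forall>x\<in>H. adj H g x = g x) \<and>
     (\<forall>a. \<forall>x\<in>H. g (r a x) = r a (g x)) \<and>
     (\<forall>x\<in>H. F (g x) = - g (F x)) \<and>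
     \<comment> \<open>Fredholm conditions modulo compacts\<close>
     (\<forall>a. compact_on H (\<lambda>x. F (F (r a x)) - r a x)) \<and>
     (\<forall>a. compact_on H (\<lambda>x. F (r a x) - adj H F (r a x))) \<and>
     (\<forall>a. compact_on H (\<lambda>x. F (r a x) - r a (F x))) \<and>
     \<comment> \<open>multigrading\<close>
     (\<forall>j<p. bounded_on H (e j) \<and>
        (\<forall>x\<in>H. e j (g x) = - g (e j x)) \<and>
        (\<forall>x\<in>H. adj H (e j) x = - e j x) \<and>
        (\<forall>x\<in>H. e j (e j x) = - x) \<and>
        (\<forall>i<p. i \<noteq> j \<longrightarrow> (\<forall>x\<in>H. e i (e j x) + e j (e i x) = 0)) \<and>
        (\<forall>x\<in>H. e j (F x) = F (e j x)) \<and>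
        (\<forall>a. \<forall>x\<in>H. e j (r a x) = r a (e j x))))"

definition unitarily_equiv :: "nat \<Rightarrow> 'a fmod \<Rightarrow> 'a fmod \<Rightarrow> bool" where
  "unitarily_equiv p m1 m2 \<longleftrightarrow> (\<exists>U.
     (\<forall>x\<in>Hs m1. \<forall>y\<in>Hs m1. U (x + y) = U x + U y) \<and>
     (\<forall>c. \<forall>x\<in>Hs m1. U (csc c x) = csc c (U x)) \<and>
     (\<forall>x\<in>Hs m1. l2norm (U x) = l2norm x) \<and>
     U ` Hs m1 = Hs m2 \<and>
     (\<forall>x\<in>Hs m1. U (gam m1 x) = gam m2 (U x)) \<and>
     (\<forall>a. \<forall>x\<in>Hs m1. U (rho m1 a x) = rho m2 a (U x)) \<and>
     (\<forall>x\<in>Hs m1. U (Fop m1 x) = Fop m2 (U x)) \<and>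
     (\<forall>j<p. \<forall>x\<in>Hs m1. U (eps m1 j x) = eps m2 j (U x)))"

definition op_homotopic ::
  "(complex \<Rightarrow> 'a::{banach,real_normed_algebra} \<Rightarrow> 'a) \<Rightarrow> ('a \<Rightarrow> 'a) \<Rightarrow> nat \<Rightarrow> 'a fmod \<Rightarrow> 'a fmod \<Rightarrow> bool" where
  "op_homotopic scC st p m0 m1 \<longleftrightarrow> Hs m0 = Hs m1 \<and>
     (\<forall>x\<in>Hs m0. gam m0 x = gam m1 x) \<and>
     (\<forall>a. \<forall>x\<in>Hs m0. rho m0 a x = rho m1 a x) \<and>
     (\<forall>j<p. \<forall>x\<in>Hs m0. eps m0 j x = eps m1 j x) \<and>
     (\<exists>Fp :: real \<Rightarrow> op.
        (\<forall>t\<in>{0..1}. pgraded_fmod scC st p (m0\<lparr>Fop := Fp t\<rparr>)) \<and>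
        (\<forall>x\<in>Hs m0. Fp 0 x = Fop m0 x \<and> Fp 1 x = Fop m1 x) \<and>
        (\<forall>t\<in>{0..1}. \<forall>e>0. \<exists>d>0. \<forall>s\<in>{0..1}. \<bar>s - t\<bar> < d \<longrightarrow>
           (\<forall>x\<in>Hs m0. l2norm (Fp s x - Fp t x) \<le> e * l2norm x)))"

text \<open>Direct sum, realised inside l2(N) by interleaving even and odd coordinates.\<close>
definition interleave :: "cseq \<Rightarrow> cseq \<Rightarrow> cseq" where
  "interleave f g = (\<lambda>n. if even n then f (n div 2) else g (n div 2))"

definition evens :: "cseq \<Rightarrow> cseq" where "evens x = (\<lambda>n. x (2 * n))"
definition odds :: "cseq \<Rightarrow> cseq" where "odds x = (\<lambda>n. x (2 * n + 1))"

definition dsum_op :: "op \<Rightarrow> op \<Rightarrow> op" where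
  "dsum_op S T = (\<lambda>x. interleave (S (evens x)) (T (odds x)))"

definition dsum :: "'a fmod \<Rightarrow> 'a fmod \<Rightarrow> 'a fmod" where
  "dsum m1 m2 = \<lparr>Hs = {interleave f g | f g. f \<in> Hs m1 \<and> g \<in> Hs m2},
     gam = dsum_op (gam m1) (gam m2),
     rho = (\<lambda>a. dsum_op (rho m1 a) (rho m2 a)),
     Fop = dsum_op (Fop m1) (Fop m2),
     eps = (\<lambda>j. dsum_op (eps m1 j) (eps m2 j))\<rparr>"

text \<open>K^{-p}(A) is the free abelian group on p-graded Fredholm modules (functions to int
with finite support) modulo the subgroup Krel generated by unitary equivalence,
operator homotopy and additivity under direct sums. (Adding unitary equivalence as a
relation is the same as taking the free group on equivalence classes.)\<close>

definition gen :: "'a fmod \<Rightarrow> ('a fmod \<Rightarrow> int)" where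
  "gen m = (\<lambda>y. if y = m then 1 else 0)"

inductive_set Krel ::
  "(complex \<Rightarrow> 'a::{banach,real_normed_algebra} \<Rightarrow> 'a) \<Rightarrow> ('a \<Rightarrow> 'a) \<Rightarrow> nat \<Rightarrow> ('a fmod \<Rightarrow> int) set"
  for scC st p where
  zero: "0 \<in> Krel scC st p"
| ueq: "pgraded_fmod scC st p m0 \<Longrightarrow> pgraded_fmod scC st p m1 \<Longrightarrow> unitarily_equiv p m0 m1
         \<Longrightarrow> gen m0 - gen m1 \<in> Krel scC st p"
| homot: "pgraded_fmod scC st p m0 \<Longrightarrow> pgraded_fmod scC st p m1 \<Longrightarrow> op_homotopic scC st p m0 m1
         \<Longrightarrow> gen m0 - gen m1 \<in> Krel scC st p"
| dsum: "pgraded_fmod scC st p m0 \<Longrightarrow> pgraded_fmod scC st p m1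
         \<Longrightarrow> gen (dsum m0 m1) - gen m0 - gen m1 \<in> Krel scC st p"
| add: "u \<in> Krel scC st p \<Longrightarrow> v \<in> Krel scC st p \<Longrightarrow> u + v \<in> Krel scC st p"
| neg: "u \<in> Krel scC st p \<Longrightarrow> - u \<in> Krel scC st p"

definition Kclass_zero ::
  "(complex \<Rightarrow> 'a::{banach,real_normed_algebra} \<Rightarrow> 'a) \<Rightarrow> ('a \<Rightarrow> 'a) \<Rightarrow> nat \<Rightarrow> 'a fmod \<Rightarrow> bool" where
  "Kclass_zero scC st p m \<longleftrightarrow> gen m \<in> Krel scC st p"

end

theory Submission
  imports Defs
begin

text \<open>Rotating \<open>F\<close> into \<open>E\<close> along \<open>F\<^sub>t = cos (\<pi>t/2) F + sin (\<pi>t/2) E\<close> is an operator homotopy: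
  since \<open>E\<close> anticommutes with \<open>F\<close>, \<open>F\<^sub>t\<^sup>2 - 1 = cos\<^sup>2 (\<pi>t/2) (F\<^sup>2 - 1)\<close>, and the other Fredholm
  conditions also only acquire scalar factors. The endpoint \<open>(H, \<rho>, E)\<close> is degenerate, and a
  degenerate module \<open>x\<close> vanishes by the Eilenberg swindle: its infinite amplification \<open>x\<^sup>\<infinity>\<close> is
  again a Fredholm module, and \<open>x \<oplus> x\<^sup>\<infinity> = x\<^sup>\<infinity>\<close> holds literally for the interleaving realisation
  of direct sums. Adjoints, which the definitions only describe implicitly, exist by the Riesz
  representation theorem, proved by minimising \<open>\<parallel>x\<parallel>\<^sup>2 - 2 Re \<phi>(x)\<close> over a closed subspace
  of \<open>\<ell>\<^sup>2\<close>.\<close>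

section \<open>The sequence space \<open>\<ell>\<^sup>2\<close>\<close>

definition l2sqnorm :: "cseq \<Rightarrow> real" where
  "l2sqnorm x = (\<Sum>n. (cmod (x n))\<^sup>2)"

lemma csc_apply[simp]: "csc c x n = c * x n"
  by (simp add: csc_def)

lemma uminus_eq_csc: "- x = csc (-1) x"
  by (simp add: fun_eq_iff)

lemma diff_eq_add_csc: "(x::cseq) - y = x + csc (-1) y"
  by (rule ext) simp

lemma L2_iff: "x \<in> L2 \<longleftrightarrow> summable (\<lambda>n. (cmod (x n))\<^sup>2)"
  by (simp add: L2_def)

lemma l2norm_eq_sqrt: "l2norm x = sqrt (l2sqnorm x)"
  by (simp add: l2norm_def l2sqnorm_def)

lemma l2sqnorm_nonneg: "x \<in> L2 \<Longrightarrow> 0 \<le> l2sqnorm x"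
  unfolding l2sqnorm_def L2_iff by (intro suminf_nonneg) auto

lemma l2sqnorm_eq_square: "x \<in> L2 \<Longrightarrow> l2sqnorm x = (l2norm x)\<^sup>2"
  by (simp add: l2norm_eq_sqrt l2sqnorm_nonneg)

lemma l2norm_nonneg: "x \<in> L2 \<Longrightarrow> 0 \<le> l2norm x"
  by (simp add: l2norm_eq_sqrt l2sqnorm_nonneg)

lemma L2_zero[simp]: "0 \<in> L2"
  by (simp add: L2_iff)

lemma l2sqnorm_zero[simp]: "l2sqnorm 0 = 0"
  by (simp add: l2sqnorm_def)

lemma l2norm_zero[simp]: "l2norm 0 = 0"
  by (simp add: l2norm_eq_sqrt)

lemma cmod_add_square_le: "(cmod (a + b))\<^sup>2 \<le> 2 * (cmod a)\<^sup>2 + 2 * (cmod b)\<^sup>2"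
proof -
  have "(cmod (a + b))\<^sup>2 \<le> (cmod a + cmod b)\<^sup>2"
    by (intro power_mono norm_triangle_ineq) auto
  also have "\<dots> \<le> 2 * (cmod a)\<^sup>2 + 2 * (cmod b)\<^sup>2"
    using sum_squares_bound[of "cmod a" "cmod b"] by (simp add: power2_sum)
  finally show ?thesis .
qed

lemma L2_add: "x \<in> L2 \<Longrightarrow> y \<in> L2 \<Longrightarrow> x + y \<in> L2"
  unfolding L2_iff
  by (rule summable_comparison_test'[where g="\<lambda>n. 2 * (cmod (x n))\<^sup>2 + 2 * (cmod (y n))\<^sup>2" and N=0])
     (auto intro!: summable_add summable_mult cmod_add_square_le)

lemma L2_csc: "x \<in> L2 \<Longrightarrow> csc c x \<in> L2"
  unfolding L2_iff by (simp add: norm_mult power_mult_distrib summable_mult)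

lemma L2_diff: "x \<in> L2 \<Longrightarrow> y \<in> L2 \<Longrightarrow> x - y \<in> L2"
  unfolding diff_eq_add_csc by (intro L2_add L2_csc)

lemma l2sqnorm_csc: "x \<in> L2 \<Longrightarrow> l2sqnorm (csc c x) = (cmod c)\<^sup>2 * l2sqnorm x"
  unfolding l2sqnorm_def L2_iff by (simp add: norm_mult power_mult_distrib suminf_mult)

lemma l2norm_csc: "x \<in> L2 \<Longrightarrow> l2norm (csc c x) = cmod c * l2norm x"
  by (simp add: l2norm_eq_sqrt l2sqnorm_csc real_sqrt_mult)

lemma l2norm_uminus: "x \<in> L2 \<Longrightarrow> l2norm (- x) = l2norm x"
  by (simp add: uminus_eq_csc l2norm_csc)

lemma l2sqnorm_coordinate_le: "x \<in> L2 \<Longrightarrow> (cmod (x k))\<^sup>2 \<le> l2sqnorm x"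
  unfolding l2sqnorm_def L2_iff using sum_le_suminf[of "\<lambda>n. (cmod (x n))\<^sup>2" "{k}"] by auto

lemma cmod_le_l2norm: "x \<in> L2 \<Longrightarrow> cmod (x k) \<le> l2norm x"
  using l2sqnorm_coordinate_le[of x k] by (simp add: l2norm_eq_sqrt real_le_rsqrt)

lemma l2sqnorm_eq_0_iff: "x \<in> L2 \<Longrightarrow> l2sqnorm x = 0 \<longleftrightarrow> x = 0"
  using l2sqnorm_coordinate_le[of x] by (fastforce simp: fun_eq_iff)

lemma summable_l2inner_norm:
  assumes "x \<in> L2" and "y \<in> L2"
  shows "summable (\<lambda>n. cmod (x n * cnj (y n)))"
proof (rule summable_comparison_test'[where g="\<lambda>n. ((cmod (x n))\<^sup>2 + (cmod (y n))\<^sup>2) / 2" and N=0])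
  show "summable (\<lambda>n. ((cmod (x n))\<^sup>2 + (cmod (y n))\<^sup>2) / 2)"
    using assms by (intro summable_add summable_divide) (auto simp: L2_iff)
  show "norm (cmod (x n * cnj (y n))) \<le> ((cmod (x n))\<^sup>2 + (cmod (y n))\<^sup>2) / 2" for n
    using sum_squares_bound[of "cmod (x n)" "cmod (y n)"] by (simp add: norm_mult)
qed

lemma summable_l2inner: "x \<in> L2 \<Longrightarrow> y \<in> L2 \<Longrightarrow> summable (\<lambda>n. x n * cnj (y n))"
  by (rule summable_norm_cancel[OF summable_l2inner_norm])

lemma l2inner_add_left:
  "x \<in> L2 \<Longrightarrow> y \<in> L2 \<Longrightarrow> z \<in> L2 \<Longrightarrow> l2inner (x + y) z = l2inner x z + l2inner y z"
  unfolding l2inner_def using summable_l2inner[of x z] summable_l2inner[of y z]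
  by (simp add: distrib_right suminf_add)

lemma l2inner_csc_left: "x \<in> L2 \<Longrightarrow> z \<in> L2 \<Longrightarrow> l2inner (csc c x) z = c * l2inner x z"
  unfolding l2inner_def using summable_l2inner[of x z] by (simp add: mult.assoc suminf_mult)

lemma l2inner_commute:
  assumes "x \<in> L2" and "y \<in> L2"
  shows "l2inner y x = cnj (l2inner x y)"
proof -
  have "(\<lambda>n. cnj (x n * cnj (y n))) sums cnj (l2inner x y)"
    unfolding l2inner_def using summable_l2inner[OF assms] by (intro sums_cnj[THEN iffD2] summable_sums)
  then show ?thesis
    unfolding l2inner_def by (simp add: sums_iff mult.commute)
qed

lemma l2inner_add_right:
  "x \<in> L2 \<Longrightarrow> y \<in> L2 \<Longrightarrow> z \<in> L2 \<Longrightarrow> l2inner z (x + y) = l2inner z x + l2inner z y"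
  using l2inner_commute[of "x + y" z] l2inner_commute[of x z] l2inner_commute[of y z]
  by (simp add: l2inner_add_left L2_add)

lemma l2inner_csc_right: "x \<in> L2 \<Longrightarrow> z \<in> L2 \<Longrightarrow> l2inner z (csc c x) = cnj c * l2inner z x"
  using l2inner_commute[of "csc c x" z] l2inner_commute[of x z]
  by (simp add: l2inner_csc_left L2_csc)

lemma l2inner_diff_right:
  "x \<in> L2 \<Longrightarrow> y \<in> L2 \<Longrightarrow> z \<in> L2 \<Longrightarrow> l2inner x (y - z) = l2inner x y - l2inner x z"
  unfolding diff_eq_add_csc by (simp add: l2inner_add_right L2_csc l2inner_csc_right)

lemma l2inner_self:
  assumes "x \<in> L2"
  shows "l2inner x x = complex_of_real (l2sqnorm x)"
proof -
  have "(\<lambda>n. complex_of_real ((cmod (x n))\<^sup>2)) sums complex_of_real (l2sqnorm x)"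
    unfolding l2sqnorm_def using assms by (intro sums_of_real summable_sums) (simp add: L2_iff)
  then show ?thesis
    unfolding l2inner_def complex_norm_square by (simp add: sums_iff)
qed

lemma l2_cauchy_schwarz:
  assumes x: "x \<in> L2" and y: "y \<in> L2"
  shows "cmod (l2inner x y) \<le> l2norm x * l2norm y"
proof -
  have partial: "(\<Sum>n<N. cmod (x n) * cmod (y n)) \<le> l2norm x * l2norm y" for N
  proof -
    have "(\<Sum>n<N. cmod (x n) * cmod (y n))
        \<le> L2_set (\<lambda>n. cmod (x n)) {..<N} * L2_set (\<lambda>n. cmod (y n)) {..<N}"
      using L2_set_mult_ineq[of "\<lambda>n. cmod (x n)" "\<lambda>n. cmod (y n)" "{..<N}"] by simp
    also have "\<dots> \<le> l2norm x * l2norm y"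
      unfolding L2_set_def l2norm_def using x y
      by (intro mult_mono real_sqrt_le_mono sum_le_suminf) (auto simp: L2_iff intro: suminf_nonneg sum_nonneg)
    finally show ?thesis .
  qed
  have "cmod (l2inner x y) \<le> (\<Sum>n. cmod (x n * cnj (y n)))"
    unfolding l2inner_def by (rule summable_norm[OF summable_l2inner_norm[OF x y]])
  also have "\<dots> = (\<Sum>n. cmod (x n) * cmod (y n))"
    by (simp add: norm_mult)
  also have "\<dots> \<le> l2norm x * l2norm y"
    using summable_l2inner_norm[OF x y] partial by (intro suminf_le_const) (auto simp: norm_mult)
  finally show ?thesis .
qed

lemma l2sqnorm_add:
  assumes x: "x \<in> L2" and y: "y \<in> L2"
  shows "l2sqnorm (x + y) = l2sqnorm x + l2sqnorm y + 2 * Re (l2inner x y)"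
proof -
  have sq: "(cmod (x n + y n))\<^sup>2 = (cmod (x n))\<^sup>2 + (cmod (y n))\<^sup>2 + 2 * Re (x n * cnj (y n))" for n
    unfolding cmod_power2 by (simp add: power2_sum)
  have "(\<lambda>n. Re (x n * cnj (y n))) sums Re (l2inner x y)"
    unfolding l2inner_def by (intro sums_Re summable_sums summable_l2inner x y)
  then have "(\<lambda>n. (cmod (x n))\<^sup>2 + (cmod (y n))\<^sup>2 + 2 * Re (x n * cnj (y n)))
      sums (l2sqnorm x + l2sqnorm y + 2 * Re (l2inner x y))"
    unfolding l2sqnorm_def using x y by (intro sums_add sums_mult summable_sums) (auto simp: L2_iff)
  then show ?thesis
    unfolding l2sqnorm_def plus_fun_apply sq by (simp add: sums_iff)
qed

lemma l2sqnorm_diff: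
  assumes "x \<in> L2" and "y \<in> L2"
  shows "l2sqnorm (x - y) = l2sqnorm x + l2sqnorm y - 2 * Re (l2inner x y)"
  using l2sqnorm_add[of x "csc (-1) y"] assms
  by (simp add: diff_eq_add_csc L2_csc l2sqnorm_csc l2inner_csc_right)

lemma l2norm_triangle:
  assumes x: "x \<in> L2" and y: "y \<in> L2"
  shows "l2norm (x + y) \<le> l2norm x + l2norm y"
proof -
  have "l2sqnorm (x + y) \<le> (l2norm x)\<^sup>2 + (l2norm y)\<^sup>2 + 2 * (l2norm x * l2norm y)"
    using l2sqnorm_add[OF x y] l2_cauchy_schwarz[OF x y] complex_Re_le_cmod[of "l2inner x y"]
      l2sqnorm_eq_square[OF x] l2sqnorm_eq_square[OF y] by linarith
  also have "\<dots> = (l2norm x + l2norm y)\<^sup>2"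
    by (simp add: power2_sum)
  finally have "sqrt (l2sqnorm (x + y)) \<le> sqrt ((l2norm x + l2norm y)\<^sup>2)"
    by (rule real_sqrt_le_mono)
  then show ?thesis
    using l2norm_nonneg[OF x] l2norm_nonneg[OF y] by (simp add: l2norm_eq_sqrt)
qed

lemma l2norm_diff_ge: "x \<in> L2 \<Longrightarrow> y \<in> L2 \<Longrightarrow> \<bar>l2norm x - l2norm y\<bar> \<le> l2norm (x - y)"
  using l2norm_triangle[of "x - y" y] l2norm_triangle[of "y - x" x] l2norm_uminus[of "x - y"]
  by (simp add: L2_diff)

lemma L2_pointwise_limit:
  assumes bound: "\<And>m. m \<ge> N \<Longrightarrow> u m \<in> L2 \<and> l2sqnorm (u m) \<le> B"
    and lim: "\<And>k. (\<lambda>m. u m k) \<longlonglongrightarrow> v k"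
  shows "v \<in> L2" and "l2sqnorm v \<le> B"
proof -
  have partial: "(\<Sum>k<K. (cmod (v k))\<^sup>2) \<le> B" for K
  proof (rule LIMSEQ_le_const2)
    show "(\<lambda>m. \<Sum>k<K. (cmod (u m k))\<^sup>2) \<longlonglongrightarrow> (\<Sum>k<K. (cmod (v k))\<^sup>2)"
      by (intro tendsto_intros lim)
    show "\<exists>M. \<forall>m\<ge>M. (\<Sum>k<K. (cmod (u m k))\<^sup>2) \<le> B"
    proof (intro exI allI impI)
      fix m assume "m \<ge> N"
      then have "u m \<in> L2" and "l2sqnorm (u m) \<le> B"
        using bound by auto
      then show "(\<Sum>k<K. (cmod (u m k))\<^sup>2) \<le> B"
        unfolding l2sqnorm_def L2_iff using sum_le_suminf[of "\<lambda>k. (cmod (u m k))\<^sup>2" "{..<K}"]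
        by fastforce
    qed
  qed
  have "summable (\<lambda>k. (cmod (v k))\<^sup>2)"
    by (rule summableI_nonneg_bounded[OF _ partial]) simp
  then show "v \<in> L2" and "l2sqnorm v \<le> B"
    unfolding l2sqnorm_def L2_iff using suminf_le_const partial by auto
qed

lemma L2_Cauchy_tail:
  assumes s: "\<And>n. s n \<in> L2" and e: "e > 0"
    and N: "\<And>m n. m \<ge> N \<Longrightarrow> n \<ge> N \<Longrightarrow> l2norm (s m - s n) < e"
    and y: "\<And>k. (\<lambda>m. s m k) \<longlonglongrightarrow> y k" and n: "n \<ge> N"
  shows "s n - y \<in> L2" and "l2norm (s n - y) \<le> e"
proof -
  have "s n - s m \<in> L2 \<and> l2sqnorm (s n - s m) \<le> e\<^sup>2" if "m \<ge> N" for m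
    using L2_diff[OF s s, of n m] l2norm_nonneg[OF L2_diff[OF s s], of n m] N[OF n that]
    by (simp add: l2sqnorm_eq_square power_mono)
  moreover have "(\<lambda>m. (s n - s m) k) \<longlonglongrightarrow> (s n - y) k" for k
    using tendsto_diff[OF tendsto_const y] by simp
  ultimately have "s n - y \<in> L2" and "l2sqnorm (s n - y) \<le> e\<^sup>2"
    using L2_pointwise_limit[where u="\<lambda>m. s n - s m" and N=N] by blast+
  then have "sqrt (l2sqnorm (s n - y)) \<le> sqrt (e\<^sup>2)"
    by (intro real_sqrt_le_mono)
  with \<open>s n - y \<in> L2\<close> e show "s n - y \<in> L2" and "l2norm (s n - y) \<le> e"
    by (simp_all add: l2norm_eq_sqrt)
qed

lemma L2_complete:
  assumes s: "\<And>n. s n \<in> L2"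
    and cauchy: "\<And>e. e > 0 \<Longrightarrow> \<exists>N. \<forall>m\<ge>N. \<forall>n\<ge>N. l2norm (s m - s n) < e"
  obtains y where "y \<in> L2" and "(\<lambda>n. l2norm (s n - y)) \<longlonglongrightarrow> 0"
proof -
  have "Cauchy (\<lambda>n. s n k)" for k
  proof (rule metric_CauchyI)
    fix e :: real assume "e > 0"
    then obtain N where N: "\<forall>m\<ge>N. \<forall>n\<ge>N. l2norm (s m - s n) < e"
      using cauchy by blast
    have "dist (s m k) (s n k) \<le> l2norm (s m - s n)" for m n
      using cmod_le_l2norm[OF L2_diff[OF s s], of m n k] by (simp add: dist_norm)
    with N show "\<exists>M. \<forall>m\<ge>M. \<forall>n\<ge>M. dist (s m k) (s n k) < e"
      by (meson le_less_trans)
  qed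
  define y where "y k = lim (\<lambda>n. s n k)" for k
  have y: "(\<lambda>n. s n k) \<longlonglongrightarrow> y k" for k
    unfolding y_def using \<open>\<And>k. Cauchy (\<lambda>n. s n k)\<close> by (simp add: Cauchy_convergent_iff convergent_LIMSEQ_iff)
  obtain N where "\<forall>m\<ge>N. \<forall>n\<ge>N. l2norm (s m - s n) < 1"
    using cauchy[of 1] by auto
  then have "s N - y \<in> L2"
    by (intro L2_Cauchy_tail(1)[OF s _ _ y, of 1 N]) auto
  from L2_diff[OF s[of N] this] have yL: "y \<in> L2"
    by simp
  have "(\<lambda>n. l2norm (s n - y)) \<longlonglongrightarrow> 0"
  proof (rule LIMSEQ_I)
    fix r :: real assume "r > 0"
    then obtain N where "\<forall>m\<ge>N. \<forall>n\<ge>N. l2norm (s m - s n) < r / 2"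
      using cauchy[of "r / 2"] by auto
    then have "l2norm (s n - y) \<le> r / 2" if "n \<ge> N" for n
      using \<open>r > 0\<close> by (intro L2_Cauchy_tail(2)[OF s _ _ y that]) auto
    then show "\<exists>N. \<forall>n\<ge>N. norm (l2norm (s n - y) - 0) < r"
      using \<open>r > 0\<close> l2norm_nonneg[OF L2_diff[OF s yL]] by force
  qed
  with yL that show ?thesis
    by blast
qed

section \<open>Closed subspaces and the Riesz representation\<close>

lemma closed_subspace_L2: "closed_subspace H \<Longrightarrow> x \<in> H \<Longrightarrow> x \<in> L2"
  by (auto simp: closed_subspace_def)

lemma closed_subspace_zero: "closed_subspace H \<Longrightarrow> 0 \<in> H"
  by (auto simp: closed_subspace_def)

lemma closed_subspace_add: "closed_subspace H \<Longrightarrow> x \<in> H \<Longrightarrow> y \<in> H \<Longrightarrow> x + y \<in> H"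
  by (auto simp: closed_subspace_def)

lemma closed_subspace_csc: "closed_subspace H \<Longrightarrow> x \<in> H \<Longrightarrow> csc c x \<in> H"
  by (auto simp: closed_subspace_def)

lemma closed_subspace_diff: "closed_subspace H \<Longrightarrow> x \<in> H \<Longrightarrow> y \<in> H \<Longrightarrow> x - y \<in> H"
  unfolding diff_eq_add_csc by (intro closed_subspace_add closed_subspace_csc)

lemma closed_subspace_limit:
  "closed_subspace H \<Longrightarrow> (\<And>n. s n \<in> H) \<Longrightarrow> y \<in> L2 \<Longrightarrow> (\<lambda>n. l2norm (s n - y)) \<longlonglongrightarrow> 0 \<Longrightarrow> y \<in> H"
  unfolding closed_subspace_def by blast

lemma l2sqnorm_parallelogram:
  "x \<in> L2 \<Longrightarrow> y \<in> L2 \<Longrightarrow> l2sqnorm (x + y) + l2sqnorm (x - y) = 2 * l2sqnorm x + 2 * l2sqnorm y"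
  by (simp add: l2sqnorm_add l2sqnorm_diff)

lemma linear_coefficient_zero:
  fixes a b :: real
  assumes "\<And>t. 0 \<le> t\<^sup>2 * b + t * a"
  shows "a = 0"
proof (rule ccontr)
  assume "a \<noteq> 0"
  define t where "t = - a / (\<bar>b\<bar> + 1)"
  have a: "a = - t * (\<bar>b\<bar> + 1)"
    unfolding t_def by (simp add: add_pos_nonneg)
  have "t\<^sup>2 * b + t * a \<le> t\<^sup>2 * \<bar>b\<bar> + t * a"
    by (simp add: mult_left_mono)
  also have "\<dots> = - t\<^sup>2"
    unfolding a by (simp add: power2_eq_square algebra_simps)
  also have "\<dots> < 0"
    using \<open>a \<noteq> 0\<close> a by auto
  finally show False
    using assms[of t] by simp
qed

locale bounded_l2_functional =
  fixes H :: "cseq set" and \<phi> :: "cseq \<Rightarrow> complex" and C :: real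
  assumes closed: "closed_subspace H"
    and additive: "\<And>x y. x \<in> H \<Longrightarrow> y \<in> H \<Longrightarrow> \<phi> (x + y) = \<phi> x + \<phi> y"
    and homogeneous: "\<And>c x. x \<in> H \<Longrightarrow> \<phi> (csc c x) = c * \<phi> x"
    and bounded: "\<And>x. x \<in> H \<Longrightarrow> cmod (\<phi> x) \<le> C * l2norm x"
begin

text \<open>If \<open>\<phi> = l2inner _ z\<close> then \<open>energy x = l2sqnorm (x - z) - l2sqnorm z\<close>, so the representing vector
  is found as a minimiser.\<close>

definition energy :: "cseq \<Rightarrow> real" where
  "energy x = l2sqnorm x - 2 * Re (\<phi> x)"

lemma diff: "x \<in> H \<Longrightarrow> y \<in> H \<Longrightarrow> \<phi> (x - y) = \<phi> x - \<phi> y"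
  unfolding diff_eq_add_csc by (simp add: additive homogeneous closed_subspace_csc[OF closed])

lemma energy_lower_bound: "x \<in> H \<Longrightarrow> - (C\<^sup>2) \<le> energy x"
  using complex_Re_le_cmod[of "\<phi> x"] bounded[of x] sum_squares_bound[of C "l2norm x"]
    l2sqnorm_eq_square[OF closed_subspace_L2[OF closed]]
  unfolding energy_def by (simp add: power2_eq_square)

lemma energy_continuous:
  assumes s: "\<And>n. s n \<in> H" and z: "z \<in> H" and lim: "(\<lambda>n. l2norm (s n - z)) \<longlonglongrightarrow> 0"
  shows "(\<lambda>n. energy (s n)) \<longlonglongrightarrow> energy z"
proof -
  have sL: "s n \<in> L2" and zL: "z \<in> L2" for n
    using closed_subspace_L2[OF closed] s z by auto
  have "norm (l2norm (s n) - l2norm z) \<le> l2norm (s n - z)" for n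
    using l2norm_diff_ge[OF sL zL] by simp
  then have "(\<lambda>n. l2norm (s n)) \<longlonglongrightarrow> l2norm z"
    by (intro LIM_zero_cancel[OF Lim_null_comparison[OF always_eventually lim]]) simp
  moreover have "(\<lambda>n. Re (\<phi> (s n))) \<longlonglongrightarrow> Re (\<phi> z)"
  proof (rule LIM_zero_cancel, rule Lim_null_comparison[OF always_eventually])
    show "\<forall>n. norm (Re (\<phi> (s n)) - Re (\<phi> z)) \<le> C * l2norm (s n - z)"
    proof
      fix n
      have "norm (Re (\<phi> (s n)) - Re (\<phi> z)) \<le> cmod (\<phi> (s n) - \<phi> z)"
        using abs_Re_le_cmod[of "\<phi> (s n) - \<phi> z"] by simp
      also have "\<dots> \<le> C * l2norm (s n - z)"
        using bounded[OF closed_subspace_diff[OF closed s z]] diff[OF s z] by simp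
      finally show "norm (Re (\<phi> (s n)) - Re (\<phi> z)) \<le> C * l2norm (s n - z)" .
    qed
    show "(\<lambda>n. C * l2norm (s n - z)) \<longlonglongrightarrow> 0"
      using tendsto_mult_right_zero[OF lim] by simp
  qed
  ultimately have "(\<lambda>n. (l2norm (s n))\<^sup>2 - 2 * Re (\<phi> (s n))) \<longlonglongrightarrow> (l2norm z)\<^sup>2 - 2 * Re (\<phi> z)"
    by (rule tendsto_diff[OF tendsto_power tendsto_mult_left])
  then show ?thesis
    unfolding energy_def using l2sqnorm_eq_square[OF sL] l2sqnorm_eq_square[OF zL] by simp
qed

text \<open>Minimising sequences are Cauchy by the parallelogram law, as the midpoint of two
  near-minimisers is itself admissible.\<close>

lemma energy_parallelogram:
  assumes a: "a \<in> H" and b: "b \<in> H" and \<mu>: "\<And>x. x \<in> H \<Longrightarrow> \<mu> \<le> energy x"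
  shows "l2sqnorm (a - b) \<le> 2 * (energy a + energy b) - 4 * \<mu>"
proof -
  have HL: "a \<in> L2" "b \<in> L2"
    using closed_subspace_L2[OF closed] a b by auto
  have "\<mu> \<le> energy (csc (1/2) (a + b))"
    using a b by (intro \<mu> closed_subspace_csc[OF closed] closed_subspace_add[OF closed])
  moreover have "4 * l2sqnorm (csc (1/2) (a + b)) = l2sqnorm (a + b)"
    using HL by (simp add: l2sqnorm_csc L2_add power2_eq_square)
  moreover have "2 * Re (\<phi> (csc (1/2) (a + b))) = Re (\<phi> a) + Re (\<phi> b)"
    using a b by (simp add: homogeneous additive closed_subspace_add[OF closed])
  ultimately show ?thesis
    using l2sqnorm_parallelogram[OF HL] unfolding energy_def by argo
qed

lemma energy_minimizer: obtains z where "z \<in> H" and "\<And>x. x \<in> H \<Longrightarrow> energy z \<le> energy x"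
proof -
  have HL: "\<And>x. x \<in> H \<Longrightarrow> x \<in> L2"
    using closed_subspace_L2[OF closed] .
  define \<mu> where "\<mu> = Inf (energy ` H)"
  have bdd: "bdd_below (energy ` H)"
    using energy_lower_bound by (auto intro!: bdd_belowI)
  have \<mu>_le: "\<mu> \<le> energy x" if "x \<in> H" for x
    unfolding \<mu>_def using that bdd by (auto intro: cInf_lower)
  have "\<exists>h\<in>H. energy h < \<mu> + inverse (real (Suc n))" for n
    using cInf_lessD[of "energy ` H" "\<mu> + inverse (real (Suc n))"] closed_subspace_zero[OF closed]
    unfolding \<mu>_def by auto
  then obtain s where sH: "\<And>n. s n \<in> H" and s: "\<And>n. energy (s n) < \<mu> + inverse (real (Suc n))"
    by metis
  have "\<exists>N. \<forall>m\<ge>N. \<forall>n\<ge>N. l2norm (s m - s n) < e" if "e > 0" for e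
  proof -
    obtain N where N: "inverse (real (Suc N)) < e\<^sup>2 / 4"
      using reals_Archimedean[of "e\<^sup>2 / 4"] \<open>e > 0\<close> by auto
    have "l2norm (s m - s n) < e" if "m \<ge> N" "n \<ge> N" for m n
    proof -
      have "inverse (real (Suc m)) \<le> inverse (real (Suc N))" "inverse (real (Suc n)) \<le> inverse (real (Suc N))"
        using that by (simp_all add: field_simps)
      moreover have "l2sqnorm (s m - s n) \<le> 2 * (energy (s m) + energy (s n)) - 4 * \<mu>"
        by (rule energy_parallelogram[OF sH sH \<mu>_le])
      ultimately have "l2sqnorm (s m - s n) < e\<^sup>2"
        using s[of m] s[of n] N by argo
      then show ?thesis
        using real_sqrt_less_mono \<open>e > 0\<close> by (fastforce simp: l2norm_eq_sqrt)
    qed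
    then show ?thesis
      by blast
  qed
  then obtain z where zL: "z \<in> L2" and lim: "(\<lambda>n. l2norm (s n - z)) \<longlonglongrightarrow> 0"
    using L2_complete[of s] HL[OF sH] by blast
  have zH: "z \<in> H"
    by (rule closed_subspace_limit[OF closed sH zL lim])
  have "energy z \<le> \<mu>"
  proof (rule LIMSEQ_le[OF energy_continuous[OF sH zH lim]])
    show "(\<lambda>n. \<mu> + inverse (real (Suc n))) \<longlonglongrightarrow> \<mu>"
      using tendsto_add[OF tendsto_const LIMSEQ_inverse_real_of_nat, of \<mu>] by simp
    show "\<exists>N. \<forall>n\<ge>N. energy (s n) \<le> \<mu> + inverse (real (Suc n))"
      using s less_imp_le by blast
  qed
  then show ?thesis
    using that zH \<mu>_le by force
qed

lemma representation: obtains z where "z \<in> H" and "\<And>x. x \<in> H \<Longrightarrow> \<phi> x = l2inner x z"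
proof -
  obtain z where zH: "z \<in> H" and min: "\<And>x. x \<in> H \<Longrightarrow> energy z \<le> energy x"
    using energy_minimizer by blast
  have zL: "z \<in> L2"
    using closed_subspace_L2[OF closed zH] .
  have re: "Re (l2inner z x) = Re (\<phi> x)" if x: "x \<in> H" for x
  proof -
    have xL: "x \<in> L2"
      using closed_subspace_L2[OF closed x] .
    have "0 \<le> t\<^sup>2 * l2sqnorm x + t * (2 * (Re (l2inner z x) - Re (\<phi> x)))" for t
    proof -
      have "energy z \<le> energy (z + csc (complex_of_real t) x)"
        using x zH by (intro min closed_subspace_add[OF closed] closed_subspace_csc[OF closed])
      moreover have "l2sqnorm (z + csc (complex_of_real t) x)
          = l2sqnorm z + t\<^sup>2 * l2sqnorm x + 2 * (t * Re (l2inner z x))"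
        using l2sqnorm_add[OF zL L2_csc[OF xL]] by (simp add: l2sqnorm_csc xL l2inner_csc_right zL)
      moreover have "\<phi> (z + csc (complex_of_real t) x) = \<phi> z + complex_of_real t * \<phi> x"
        using x zH by (simp add: additive homogeneous closed_subspace_csc[OF closed])
      ultimately show ?thesis
        unfolding energy_def by (simp add: algebra_simps)
    qed
    then show ?thesis
      using linear_coefficient_zero by fastforce
  qed
  have "\<phi> x = l2inner x z" if x: "x \<in> H" for x
  proof -
    have "Re (l2inner z (csc \<i> x)) = Re (\<phi> (csc \<i> x))"
      by (rule re[OF closed_subspace_csc[OF closed x]])
    then have "Im (l2inner z x) = - Im (\<phi> x)"
      using x zL closed_subspace_L2[OF closed x] by (simp add: l2inner_csc_right homogeneous)
    then show ?thesis
      using re[OF x] l2inner_commute[OF zL closed_subspace_L2[OF closed x]] by (simp add: complex_eq_iff)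
  qed
  then show ?thesis
    using that zH by blast
qed

end

section \<open>Bounded operators and adjoints\<close>

lemma bounded_on_mem: "bounded_on H T \<Longrightarrow> x \<in> H \<Longrightarrow> T x \<in> H"
  by (simp add: bounded_on_def)

lemma bounded_on_add: "bounded_on H T \<Longrightarrow> x \<in> H \<Longrightarrow> y \<in> H \<Longrightarrow> T (x + y) = T x + T y"
  by (simp add: bounded_on_def)

lemma bounded_on_csc: "bounded_on H T \<Longrightarrow> x \<in> H \<Longrightarrow> T (csc c x) = csc c (T x)"
  by (simp add: bounded_on_def)

lemma bounded_on_normE:
  assumes H: "closed_subspace H" and T: "bounded_on H T"
  obtains C where "C \<ge> 0" and "\<And>x. x \<in> H \<Longrightarrow> l2norm (T x) \<le> C * l2norm x"
proof -
  obtain C where C: "\<And>x. x \<in> H \<Longrightarrow> l2norm (T x) \<le> C * l2norm x"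
    using T unfolding bounded_on_def by blast
  have "C * l2norm x \<le> \<bar>C\<bar> * l2norm x" if "x \<in> H" for x
    using l2norm_nonneg[OF closed_subspace_L2[OF H that]] by (intro mult_right_mono) auto
  with C show ?thesis
    using that[of "\<bar>C\<bar>"] by force
qed

lemma bounded_on_lincomb_apply:
  assumes "closed_subspace H" and "bounded_on H T" and "u \<in> H" and "v \<in> H"
  shows "T (csc c u + csc d v) = csc c (T u) + csc d (T v)"
proof -
  have "T (csc c u + csc d v) = T (csc c u) + T (csc d v)"
    using assms by (intro bounded_on_add closed_subspace_csc)
  then show ?thesis
    using assms by (simp only: bounded_on_csc)
qed

lemma bounded_on_lincomb:
  assumes H: "closed_subspace H" and A: "bounded_on H A" and B: "bounded_on H B"
  shows "bounded_on H (\<lambda>x. csc c (A x) + csc d (B x))"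
proof -
  obtain CA where "CA \<ge> 0" and CA: "\<And>x. x \<in> H \<Longrightarrow> l2norm (A x) \<le> CA * l2norm x"
    using bounded_on_normE[OF H A] by blast
  obtain CB where "CB \<ge> 0" and CB: "\<And>x. x \<in> H \<Longrightarrow> l2norm (B x) \<le> CB * l2norm x"
    using bounded_on_normE[OF H B] by blast
  have "l2norm (csc c (A x) + csc d (B x)) \<le> (cmod c * CA + cmod d * CB) * l2norm x" if x: "x \<in> H" for x
  proof -
    have AL: "A x \<in> L2" and BL: "B x \<in> L2"
      using closed_subspace_L2[OF H] bounded_on_mem[OF A x] bounded_on_mem[OF B x] by auto
    have "l2norm (csc c (A x) + csc d (B x)) \<le> cmod c * l2norm (A x) + cmod d * l2norm (B x)"
      using l2norm_triangle[OF L2_csc[OF AL] L2_csc[OF BL]] by (simp add: l2norm_csc AL BL)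
    also have "\<dots> \<le> cmod c * (CA * l2norm x) + cmod d * (CB * l2norm x)"
      using CA CB x by (intro add_mono mult_left_mono) auto
    finally show ?thesis
      by (simp add: algebra_simps)
  qed
  then show ?thesis
    unfolding bounded_on_def using A B
    by (auto simp: bounded_on_mem bounded_on_add bounded_on_csc closed_subspace_add[OF H]
        closed_subspace_csc[OF H] fun_eq_iff algebra_simps intro!: exI[of _ "cmod c * CA + cmod d * CB"])
qed

lemma bounded_on_uminus:
  assumes H: "closed_subspace H" and T: "bounded_on H T"
  shows "bounded_on H (\<lambda>x. - T x)"
proof -
  have "bounded_on H (\<lambda>x. csc (-1) (T x) + csc 0 (T x))"
    by (rule bounded_on_lincomb[OF H T T])
  moreover have "(\<lambda>x. csc (-1) (T x) + csc 0 (T x)) = (\<lambda>x. - T x)"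
    by (simp add: fun_eq_iff)
  ultimately show ?thesis
    by simp
qed

lemma l2inner_right_unique:
  assumes H: "closed_subspace H" and z1: "z1 \<in> H" and z2: "z2 \<in> H"
    and eq: "\<And>x. x \<in> H \<Longrightarrow> l2inner x z1 = l2inner x z2"
  shows "z1 = z2"
proof -
  have d: "z1 - z2 \<in> H"
    by (rule closed_subspace_diff[OF H z1 z2])
  then have "l2inner (z1 - z2) (z1 - z2) = 0"
    using closed_subspace_L2[OF H] z1 z2 eq[OF d] by (simp add: l2inner_diff_right)
  then show ?thesis
    using closed_subspace_L2[OF H d] by (simp add: l2inner_self l2sqnorm_eq_0_iff)
qed

lemma adj_eqI:
  assumes H: "closed_subspace H" and z: "z \<in> H"
    and eq: "\<And>x. x \<in> H \<Longrightarrow> l2inner (T x) y = l2inner x z"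
  shows "adj H T y = z"
  unfolding adj_def
proof (rule the_equality)
  show "z \<in> H \<and> (\<forall>x\<in>H. l2inner (T x) y = l2inner x z)"
    using z eq by blast
  show "w = z" if "w \<in> H \<and> (\<forall>x\<in>H. l2inner (T x) y = l2inner x w)" for w
    using that z eq by (intro l2inner_right_unique[OF H]) auto
qed

lemma adj_mem_and_l2inner_adj:
  assumes H: "closed_subspace H" and T: "bounded_on H T" and y: "y \<in> H"
  shows "adj H T y \<in> H \<and> (\<forall>x\<in>H. l2inner (T x) y = l2inner x (adj H T y))"
proof -
  obtain C where "C \<ge> 0" and C: "\<And>x. x \<in> H \<Longrightarrow> l2norm (T x) \<le> C * l2norm x"
    using bounded_on_normE[OF H T] by blast
  have yL: "y \<in> L2"
    using closed_subspace_L2[OF H y] .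
  have "bounded_l2_functional H (\<lambda>x. l2inner (T x) y) (C * l2norm y)"
  proof
    fix x x' c assume x: "x \<in> H" and x': "x' \<in> H"
    have TL: "T x \<in> L2" "T x' \<in> L2"
      using closed_subspace_L2[OF H] bounded_on_mem[OF T] x x' by auto
    show "l2inner (T (x + x')) y = l2inner (T x) y + l2inner (T x') y"
      using x x' TL yL by (simp add: bounded_on_add[OF T] l2inner_add_left)
    show "l2inner (T (csc c x)) y = c * l2inner (T x) y"
      using x TL yL by (simp add: bounded_on_csc[OF T] l2inner_csc_left)
    have "cmod (l2inner (T x) y) \<le> l2norm (T x) * l2norm y"
      by (rule l2_cauchy_schwarz[OF TL(1) yL])
    also have "\<dots> \<le> C * l2norm x * l2norm y"
      using C[OF x] l2norm_nonneg[OF yL] by (rule mult_right_mono)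
    finally show "cmod (l2inner (T x) y) \<le> C * l2norm y * l2norm x"
      by (simp add: ac_simps)
  qed (rule H)
  then obtain z where z: "z \<in> H" "\<And>x. x \<in> H \<Longrightarrow> l2inner (T x) y = l2inner x z"
    using bounded_l2_functional.representation by metis
  then have "adj H T y = z"
    by (intro adj_eqI[OF H])
  with z show ?thesis
    by simp
qed

lemma adj_mem: "closed_subspace H \<Longrightarrow> bounded_on H T \<Longrightarrow> y \<in> H \<Longrightarrow> adj H T y \<in> H"
  using adj_mem_and_l2inner_adj by blast

lemma l2inner_adj:
  "closed_subspace H \<Longrightarrow> bounded_on H T \<Longrightarrow> x \<in> H \<Longrightarrow> y \<in> H \<Longrightarrow> l2inner (T x) y = l2inner x (adj H T y)"
  using adj_mem_and_l2inner_adj by blast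

lemma adj_lincomb:
  assumes H: "closed_subspace H" and A: "bounded_on H A" and B: "bounded_on H B" and y: "y \<in> H"
  shows "adj H (\<lambda>x. csc c (A x) + csc d (B x)) y = csc (cnj c) (adj H A y) + csc (cnj d) (adj H B y)"
proof (rule adj_eqI[OF H])
  show "csc (cnj c) (adj H A y) + csc (cnj d) (adj H B y) \<in> H"
    using adj_mem[OF H A y] adj_mem[OF H B y]
    by (intro closed_subspace_add[OF H] closed_subspace_csc[OF H])
  fix x assume x: "x \<in> H"
  have L2: "A x \<in> L2" "B x \<in> L2" "y \<in> L2" "x \<in> L2" "adj H A y \<in> L2" "adj H B y \<in> L2"
    using closed_subspace_L2[OF H] bounded_on_mem[OF A x] bounded_on_mem[OF B x] x y
      adj_mem[OF H A y] adj_mem[OF H B y] by auto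
  then show "l2inner (csc c (A x) + csc d (B x)) y
      = l2inner x (csc (cnj c) (adj H A y) + csc (cnj d) (adj H B y))"
    using l2inner_adj[OF H A x y] l2inner_adj[OF H B x y]
    by (simp add: l2inner_add_left l2inner_add_right l2inner_csc_left l2inner_csc_right L2_csc)
qed

lemma l2inner_eq_if_adj:
  assumes "closed_subspace H" and "bounded_on H T" and "\<And>y. y \<in> H \<Longrightarrow> adj H T y = S y"
    and "x \<in> H" and "y \<in> H"
  shows "l2inner (T x) y = l2inner x (S y)"
  using l2inner_adj[of H T x y] assms by simp

lemma adjoint_defect_bound:
  assumes H: "closed_subspace H" and A: "bounded_on H A" and B: "bounded_on H B"
  obtains K where "K \<ge> 0"
    and "\<And>x y. x \<in> H \<Longrightarrow> y \<in> H \<Longrightarrow> cmod (l2inner (A x) y - l2inner x (B y)) \<le> K * l2norm x * l2norm y"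
proof -
  obtain CA where "CA \<ge> 0" and CA: "\<And>x. x \<in> H \<Longrightarrow> l2norm (A x) \<le> CA * l2norm x"
    using bounded_on_normE[OF H A] by blast
  obtain CB where "CB \<ge> 0" and CB: "\<And>x. x \<in> H \<Longrightarrow> l2norm (B x) \<le> CB * l2norm x"
    using bounded_on_normE[OF H B] by blast
  have "cmod (l2inner (A x) y - l2inner x (B y)) \<le> (CA + CB) * l2norm x * l2norm y"
    if x: "x \<in> H" and y: "y \<in> H" for x y
  proof -
    have L2: "x \<in> L2" "y \<in> L2" "A x \<in> L2" "B y \<in> L2"
      using closed_subspace_L2[OF H] bounded_on_mem[OF A x] bounded_on_mem[OF B y] x y by auto
    have "cmod (l2inner (A x) y - l2inner x (B y)) \<le> l2norm (A x) * l2norm y + l2norm x * l2norm (B y)"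
      using norm_triangle_ineq4[of "l2inner (A x) y" "l2inner x (B y)"]
        l2_cauchy_schwarz[of "A x" y] l2_cauchy_schwarz[of x "B y"] L2
      by linarith
    also have "\<dots> \<le> (CA * l2norm x) * l2norm y + l2norm x * (CB * l2norm y)"
      using CA[OF x] CB[OF y] l2norm_nonneg L2
      by (intro add_mono mult_right_mono mult_left_mono) auto
    finally show ?thesis
      by (simp add: algebra_simps)
  qed
  with that[of "CA + CB"] \<open>CA \<ge> 0\<close> \<open>CB \<ge> 0\<close> show ?thesis
    by simp
qed

lemma compact_on_zero:
  assumes H: "closed_subspace H" and zero: "\<And>x. x \<in> H \<Longrightarrow> T x = 0"
  shows "compact_on H T"
  unfolding compact_on_def
proof (intro allI impI)
  fix s :: "nat \<Rightarrow> cseq" and B :: real assume "\<forall>n. s n \<in> H \<and> l2norm (s n) \<le> B"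
  then have "(\<lambda>n. l2norm (T (s (id n)) - 0)) \<longlonglongrightarrow> 0"
    using zero by simp
  then show "\<exists>r y. strict_mono r \<and> y \<in> H \<and> (\<lambda>n. l2norm (T (s (r n)) - y)) \<longlonglongrightarrow> 0"
    using closed_subspace_zero[OF H] strict_mono_id by blast
qed

lemma compact_on_csc:
  assumes H: "closed_subspace H" and K: "compact_on H T" and TL: "\<And>x. x \<in> H \<Longrightarrow> T x \<in> L2"
    and eq: "\<And>x. x \<in> H \<Longrightarrow> T' x = csc c (T x)"
  shows "compact_on H T'"
  unfolding compact_on_def
proof (intro allI impI)
  fix s :: "nat \<Rightarrow> cseq" and B :: real assume s: "\<forall>n. s n \<in> H \<and> l2norm (s n) \<le> B"
  then obtain r y where r: "strict_mono r" and y: "y \<in> H"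
    and lim: "(\<lambda>n. l2norm (T (s (r n)) - y)) \<longlonglongrightarrow> 0"
    using K unfolding compact_on_def by blast
  have "l2norm (T' (s (r n)) - csc c y) = cmod c * l2norm (T (s (r n)) - y)" for n
  proof -
    have "T' (s (r n)) - csc c y = csc c (T (s (r n)) - y)"
      using eq s by (simp add: fun_eq_iff right_diff_distrib)
    then show ?thesis
      using l2norm_csc[OF L2_diff[OF TL closed_subspace_L2[OF H y]]] s by simp
  qed
  then have "(\<lambda>n. l2norm (T' (s (r n)) - csc c y)) \<longlonglongrightarrow> 0"
    using tendsto_mult_right_zero[OF lim, of "cmod c"] by simp
  then show "\<exists>r y. strict_mono r \<and> y \<in> H \<and> (\<lambda>n. l2norm (T' (s (r n)) - y)) \<longlonglongrightarrow> 0"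
    using r closed_subspace_csc[OF H y] by blast
qed

section \<open>Even and odd parts\<close>

lemma evens_apply[simp]: "evens x n = x (2*n)"
  by (simp add: evens_def)

lemma odds_apply[simp]: "odds x n = x (2*n+1)"
  by (simp add: odds_def)

lemma interleave_even[simp]: "interleave f g (2*n) = f n"
  by (simp add: interleave_def)

lemma interleave_odd[simp]: "interleave f g (Suc (2*n)) = g n"
  by (simp add: interleave_def)

lemma evens_interleave[simp]: "evens (interleave f g) = f"
  by (rule ext) simp

lemma odds_interleave[simp]: "odds (interleave f g) = g"
  by (rule ext) simp

lemma interleave_evens_odds: "interleave (evens w) (odds w) = w"
  by (rule ext) (auto simp: interleave_def elim!: evenE oddE)

lemma evens_add[simp]: "evens (x + y) = evens x + evens y"
  by (rule ext) simp

lemma odds_add[simp]: "odds (x + y) = odds x + odds y"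
  by (rule ext) simp

lemma evens_diff[simp]: "evens (x - y) = evens x - evens y"
  by (rule ext) simp

lemma odds_diff[simp]: "odds (x - y) = odds x - odds y"
  by (rule ext) simp

lemma evens_uminus[simp]: "evens (- x) = - evens x"
  by (rule ext) simp

lemma odds_uminus[simp]: "odds (- x) = - odds x"
  by (rule ext) simp

lemma evens_csc[simp]: "evens (csc c x) = csc c (evens x)"
  by (rule ext) simp

lemma odds_csc[simp]: "odds (csc c x) = csc c (odds x)"
  by (rule ext) simp

lemma evens_zero[simp]: "evens 0 = 0"
  by (rule ext) simp

lemma odds_zero[simp]: "odds 0 = 0"
  by (rule ext) simp

lemma sums_interleave:
  fixes f g :: "nat \<Rightarrow> 'a::real_normed_vector"
  assumes "f sums a" and "g sums b"
  shows "(\<lambda>n. if even n then f (n div 2) else g (n div 2)) sums (a + b)"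
proof -
  have "(\<lambda>n. if even n then f (n div 2) else 0) sums a"
  proof (rule sums_mono_reindex[of "\<lambda>n. 2*n", THEN iffD1])
    show "strict_mono (\<lambda>n::nat. 2*n)"
      by (simp add: strict_mono_def)
    show "(if even n then f (n div 2) else 0) = 0" if "n \<notin> range (\<lambda>n. 2*n)" for n
      using that by (auto elim!: evenE)
  qed (use assms(1) in simp)
  moreover have "(\<lambda>n. if even n then 0 else g (n div 2)) sums b"
  proof (rule sums_mono_reindex[of "\<lambda>n. 2*n+1", THEN iffD1])
    show "strict_mono (\<lambda>n::nat. 2*n+1)"
      by (simp add: strict_mono_def)
    show "(if even n then 0 else g (n div 2)) = 0" if "n \<notin> range (\<lambda>n. 2*n+1)" for n
      using that by (auto elim!: oddE)
  qed (use assms(2) in simp)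
  ultimately have "(\<lambda>n. (if even n then f (n div 2) else 0) + (if even n then 0 else g (n div 2)))
      sums (a + b)"
    by (rule sums_add)
  then show ?thesis
    by (simp add: if_distrib[of "\<lambda>z. z + _"] cong: if_cong)
qed

lemma suminf_even_odd:
  fixes f :: "nat \<Rightarrow> 'a::banach"
  assumes "summable (\<lambda>n. norm (f n))"
  shows "suminf f = (\<Sum>n. f (2*n)) + (\<Sum>n. f (2*n+1))"
proof -
  have "summable (\<lambda>n. f (2*n))" and "summable (\<lambda>n. f (2*n+1))"
    using summable_reindex[OF assms, of "\<lambda>n. 2*n"] summable_reindex[OF assms, of "\<lambda>n. 2*n+1"]
    by (auto simp: inj_on_def o_def intro: summable_norm_cancel)
  then have "(\<lambda>n. if even n then f (2 * (n div 2)) else f (2 * (n div 2) + 1))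
      sums ((\<Sum>n. f (2*n)) + (\<Sum>n. f (2*n+1)))"
    by (intro sums_interleave summable_sums)
  moreover have "(\<lambda>n. if even n then f (2 * (n div 2)) else f (2 * (n div 2) + 1)) = f"
    by (rule ext) (auto elim!: evenE oddE)
  ultimately show ?thesis
    by (simp add: sums_iff)
qed

lemma L2_evens: "w \<in> L2 \<Longrightarrow> evens w \<in> L2"
  unfolding L2_iff using summable_reindex[of "\<lambda>n. (cmod (w n))\<^sup>2" "\<lambda>n. 2*n"]
  by (simp add: inj_on_def o_def)

lemma L2_odds: "w \<in> L2 \<Longrightarrow> odds w \<in> L2"
  unfolding L2_iff using summable_reindex[of "\<lambda>n. (cmod (w n))\<^sup>2" "\<lambda>n. 2*n+1"]
  by (simp add: inj_on_def o_def)

lemma l2sqnorm_even_odd: "w \<in> L2 \<Longrightarrow> l2sqnorm w = l2sqnorm (evens w) + l2sqnorm (odds w)"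
  unfolding l2sqnorm_def L2_iff by (simp add: suminf_even_odd)

lemma l2sqnorm_odds_le: "w \<in> L2 \<Longrightarrow> l2sqnorm (odds w) \<le> l2sqnorm w"
  using l2sqnorm_even_odd[of w] l2sqnorm_nonneg[OF L2_evens, of w] by simp

lemma l2inner_even_odd:
  "x \<in> L2 \<Longrightarrow> y \<in> L2 \<Longrightarrow> l2inner x y = l2inner (evens x) (evens y) + l2inner (odds x) (odds y)"
  unfolding l2inner_def by (simp add: suminf_even_odd summable_l2inner_norm)

lemma L2_interleave: "f \<in> L2 \<Longrightarrow> g \<in> L2 \<Longrightarrow> interleave f g \<in> L2"
  unfolding L2_iff interleave_def
  using sums_interleave[OF summable_sums summable_sums, of "\<lambda>n. (cmod (f n))\<^sup>2" "\<lambda>n. (cmod (g n))\<^sup>2"]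
  by (simp add: sums_summable if_distrib[of "\<lambda>z. (cmod z)\<^sup>2"])

lemma l2sqnorm_interleave:
  "f \<in> L2 \<Longrightarrow> g \<in> L2 \<Longrightarrow> l2sqnorm (interleave f g) = l2sqnorm f + l2sqnorm g"
  using l2sqnorm_even_odd[OF L2_interleave] by simp

section \<open>Infinite amplification\<close>

text \<open>A sequence \<open>w\<close> encodes the vector of \<open>H \<oplus> H \<oplus> \<dots>\<close> whose \<open>k\<close>-th summand is \<open>slice k w\<close>:
  the first summand sits at the even coordinates, the remaining ones recursively at the odd
  coordinates, as in \<^const>\<open>dsum\<close>.\<close>

definition slice :: "nat \<Rightarrow> cseq \<Rightarrow> cseq" where
  "slice k w = evens ((odds ^^ k) w)"

definition amp_space :: "cseq set \<Rightarrow> cseq set" where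
  "amp_space H = {w \<in> L2. \<forall>k. slice k w \<in> H}"

lemma slice_0: "slice 0 w = evens w"
  by (simp add: slice_def)

lemma slice_Suc: "slice (Suc k) w = slice k (odds w)"
  unfolding slice_def funpow_Suc_right by simp

lemma odds_pow_L2: "w \<in> L2 \<Longrightarrow> (odds ^^ k) w \<in> L2"
  by (induction k) (auto intro: L2_odds)

lemma l2sqnorm_odds_pow_le: "w \<in> L2 \<Longrightarrow> l2sqnorm ((odds ^^ k) w) \<le> l2sqnorm w"
  by (induction k) (auto intro: order_trans[OF l2sqnorm_odds_le] odds_pow_L2)

lemma l2norm_odds_pow_le: "w \<in> L2 \<Longrightarrow> l2norm ((odds ^^ k) w) \<le> l2norm w"
  unfolding l2norm_eq_sqrt by (rule real_sqrt_le_mono[OF l2sqnorm_odds_pow_le])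

lemma slice_L2: "w \<in> L2 \<Longrightarrow> slice k w \<in> L2"
  unfolding slice_def by (intro L2_evens odds_pow_L2)

lemma l2norm_slice_le: "w \<in> L2 \<Longrightarrow> l2norm (slice k w) \<le> l2norm w"
proof -
  assume w: "w \<in> L2"
  have "l2sqnorm (slice k w) \<le> l2sqnorm ((odds ^^ k) w)"
    using l2sqnorm_even_odd[OF odds_pow_L2[OF w], of k] l2sqnorm_nonneg[OF L2_odds[OF odds_pow_L2[OF w]]]
    by (simp add: slice_def)
  also have "\<dots> \<le> l2sqnorm w"
    by (rule l2sqnorm_odds_pow_le[OF w])
  finally show ?thesis
    unfolding l2norm_eq_sqrt by (rule real_sqrt_le_mono)
qed

lemma odds_pow_add: "(odds ^^ k) (x + y) = (odds ^^ k) x + (odds ^^ k) y"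
  by (induction k) auto

lemma odds_pow_diff: "(odds ^^ k) (x - y) = (odds ^^ k) x - (odds ^^ k) y"
  by (induction k) auto

lemma odds_pow_csc: "(odds ^^ k) (csc c x) = csc c ((odds ^^ k) x)"
  by (induction k) auto

lemma odds_pow_zero: "(odds ^^ k) 0 = 0"
  by (induction k) auto

lemma slice_add: "slice k (x + y) = slice k x + slice k y"
  by (simp add: slice_def odds_pow_add)

lemma slice_diff: "slice k (x - y) = slice k x - slice k y"
  by (simp add: slice_def odds_pow_diff)

lemma slice_csc: "slice k (csc c x) = csc c (slice k x)"
  by (simp add: slice_def odds_pow_csc)

lemma slice_zero: "slice k 0 = 0"
  by (simp add: slice_def odds_pow_zero)

lemma amp_space_iff: "w \<in> amp_space H \<longleftrightarrow> w \<in> L2 \<and> evens w \<in> H \<and> odds w \<in> amp_space H"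
proof
  assume "w \<in> amp_space H"
  then have w: "w \<in> L2" and slices: "\<And>k. slice k w \<in> H"
    by (auto simp: amp_space_def)
  have "evens w \<in> H"
    using slices[of 0] by (simp add: slice_0)
  moreover have "odds w \<in> amp_space H"
    using L2_odds[OF w] slices by (auto simp: amp_space_def simp flip: slice_Suc)
  ultimately show "w \<in> L2 \<and> evens w \<in> H \<and> odds w \<in> amp_space H"
    using w by blast
next
  assume w: "w \<in> L2 \<and> evens w \<in> H \<and> odds w \<in> amp_space H"
  have "slice k w \<in> H" for k
    using w by (cases k) (auto simp: slice_0 slice_Suc amp_space_def)
  with w show "w \<in> amp_space H"
    by (simp add: amp_space_def)
qed

lemma amp_space_L2: "w \<in> amp_space H \<Longrightarrow> w \<in> L2"
  by (simp add: amp_space_def)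

lemma amp_space_evens: "w \<in> amp_space H \<Longrightarrow> evens w \<in> H"
  using amp_space_iff by blast

lemma amp_space_odds: "w \<in> amp_space H \<Longrightarrow> odds w \<in> amp_space H"
  using amp_space_iff by blast

lemma amp_space_odds_pow: "w \<in> amp_space H \<Longrightarrow> (odds ^^ k) w \<in> amp_space H"
  by (induction k) (auto intro: amp_space_odds)

lemma interleave_amp_space:
  assumes "closed_subspace H"
  shows "{interleave f g | f g. f \<in> H \<and> g \<in> amp_space H} = amp_space H"
proof
  have "interleave f g \<in> amp_space H" if "f \<in> H" "g \<in> amp_space H" for f g
    using that closed_subspace_L2[OF assms] amp_space_L2 L2_interleave
    by (subst amp_space_iff) auto
  then show "{interleave f g | f g. f \<in> H \<and> g \<in> amp_space H} \<subseteq> amp_space H"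
    by blast
  show "amp_space H \<subseteq> {interleave f g | f g. f \<in> H \<and> g \<in> amp_space H}"
    using interleave_evens_odds amp_space_evens amp_space_odds by (blast intro: sym)
qed

lemma closed_subspace_amp_space:
  assumes H: "closed_subspace H"
  shows "closed_subspace (amp_space H)"
  unfolding closed_subspace_def
proof (intro conjI allI ballI impI)
  show "amp_space H \<subseteq> L2" "0 \<in> amp_space H"
    by (auto simp: amp_space_def slice_zero closed_subspace_zero[OF H])
  show "x + y \<in> amp_space H" if "x \<in> amp_space H" "y \<in> amp_space H" for x y
    using that by (auto simp: amp_space_def slice_add intro: closed_subspace_add[OF H] L2_add)
  show "csc c x \<in> amp_space H" if "x \<in> amp_space H" for c x
    using that by (auto simp: amp_space_def slice_csc intro: closed_subspace_csc[OF H] L2_csc)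
next
  fix s y assume a: "(\<forall>n. s n \<in> amp_space H) \<and> y \<in> L2 \<and> (\<lambda>n. l2norm (s n - y)) \<longlonglongrightarrow> 0"
  have "slice k y \<in> H" for k
  proof (rule closed_subspace_limit[OF H])
    show "slice k (s n) \<in> H" for n
      using a by (simp add: amp_space_def)
    show "slice k y \<in> L2"
      using a slice_L2 by blast
    show "(\<lambda>n. l2norm (slice k (s n) - slice k y)) \<longlonglongrightarrow> 0"
    proof (rule Lim_null_comparison[OF always_eventually])
      show "\<forall>n. norm (l2norm (slice k (s n) - slice k y)) \<le> l2norm (s n - y)"
        using a l2norm_slice_le[OF L2_diff, of "s n" y k for n] l2norm_nonneg[OF slice_L2[OF L2_diff]]
        by (simp add: slice_diff amp_space_def)
      show "(\<lambda>n. l2norm (s n - y)) \<longlonglongrightarrow> 0"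
        using a by blast
    qed
  qed
  with a show "y \<in> amp_space H"
    by (simp add: amp_space_def)
qed

lemma cseq_eq_coinduct:
  assumes step: "\<And>a. a \<in> A \<Longrightarrow> \<sigma> a \<in> A"
    and evens: "\<And>a. a \<in> A \<Longrightarrow> evens (F a) = evens (G a)"
    and odds_F: "\<And>a. a \<in> A \<Longrightarrow> odds (F a) = F (\<sigma> a)"
    and odds_G: "\<And>a. a \<in> A \<Longrightarrow> odds (G a) = G (\<sigma> a)"
    and a: "a \<in> A"
  shows "F a = G a"
proof -
  have "\<forall>a\<in>A. F a n = G a n" for n
  proof (induction n rule: less_induct)
    case (less n)
    show ?case
    proof
      fix a assume a: "a \<in> A"
      show "F a n = G a n"
      proof (cases "even n")
        case True
        then obtain m where "n = 2*m"
          by (auto elim: evenE)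
        then show ?thesis
          using fun_cong[OF evens[OF a], of m] by simp
      next
        case False
        then obtain m where n: "n = 2*m+1"
          by (auto elim: oddE)
        then have "F (\<sigma> a) m = G (\<sigma> a) m"
          using less.IH[of m] step[OF a] by auto
        then show ?thesis
          using fun_cong[OF odds_F[OF a], of m] fun_cong[OF odds_G[OF a], of m] n by simp
      qed
    qed
  qed
  with a show ?thesis
    by auto
qed

function amplify :: "op \<Rightarrow> op" where
  "amplify T w n = (if even n then T (evens w) (n div 2) else amplify T (odds w) (n div 2))"
  by auto
termination
  by (relation "Wellfounded.measure (\<lambda>(T, w, n). n)") (auto elim: oddE)

declare amplify.simps[simp del]

lemma amplify_unfold: "amplify T w = interleave (T (evens w)) (amplify T (odds w))"
  by (rule ext, subst amplify.simps) (simp add: interleave_def)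

lemma evens_amplify[simp]: "evens (amplify T w) = T (evens w)"
  by (subst amplify_unfold) simp

lemma odds_amplify[simp]: "odds (amplify T w) = amplify T (odds w)"
  by (subst amplify_unfold) simp

lemma dsum_op_amplify: "dsum_op T (amplify T) = amplify T"
  unfolding dsum_op_def by (rule ext) (rule amplify_unfold[symmetric])

lemma slice_amplify: "slice k (amplify T w) = T (slice k w)"
  by (induction k arbitrary: w) (simp_all add: slice_0 slice_Suc)

primrec amplify_upto :: "nat \<Rightarrow> op \<Rightarrow> op" where
  "amplify_upto 0 T w = 0"
| "amplify_upto (Suc k) T w = interleave (T (evens w)) (amplify_upto k T (odds w))"

lemma amplify_upto_eq: "n < k \<Longrightarrow> amplify_upto k T w n = amplify T w n"
proof (induction k arbitrary: w n)
  case (Suc k)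
  have "amplify_upto k T (odds w) (n div 2) = amplify T (odds w) (n div 2)" if "odd n"
    using Suc that by (intro Suc.IH) (auto elim!: oddE)
  then show ?case
    by (subst amplify_unfold) (simp add: interleave_def)
qed simp

text \<open>By Fatou, via the finite amplifications \<^const>\<open>amplify_upto\<close>, which converge pointwise.\<close>

lemma amplify_L2_bound:
  assumes B: "B \<ge> 0" and T: "\<And>x. x \<in> H \<Longrightarrow> T x \<in> L2 \<and> l2sqnorm (T x) \<le> B * l2sqnorm x"
    and w: "w \<in> amp_space H"
  shows "amplify T w \<in> L2" and "l2sqnorm (amplify T w) \<le> B * l2sqnorm w"
proof -
  have upto: "amplify_upto k T w \<in> L2 \<and> l2sqnorm (amplify_upto k T w) \<le> B * l2sqnorm w"
    if "w \<in> amp_space H" for k w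
    using that
  proof (induction k arbitrary: w)
    case 0
    then show ?case
      using B l2sqnorm_nonneg[OF amp_space_L2] by (simp add: L2_iff l2sqnorm_def)
  next
    case (Suc k)
    have w: "w \<in> L2" and e: "evens w \<in> H" and o: "odds w \<in> amp_space H"
      using Suc.prems amp_space_iff by blast+
    have Te: "T (evens w) \<in> L2" "l2sqnorm (T (evens w)) \<le> B * l2sqnorm (evens w)"
      using T[OF e] by blast+
    have IH: "amplify_upto k T (odds w) \<in> L2"
      "l2sqnorm (amplify_upto k T (odds w)) \<le> B * l2sqnorm (odds w)"
      using Suc.IH[OF o] by blast+
    have "l2sqnorm (amplify_upto (Suc k) T w)
        = l2sqnorm (T (evens w)) + l2sqnorm (amplify_upto k T (odds w))"
      unfolding amplify_upto.simps by (rule l2sqnorm_interleave[OF Te(1) IH(1)])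
    also have "\<dots> \<le> B * l2sqnorm (evens w) + B * l2sqnorm (odds w)"
      using Te(2) IH(2) by (rule add_mono)
    also have "\<dots> = B * l2sqnorm w"
      using l2sqnorm_even_odd[OF w] by (simp add: algebra_simps)
    finally show ?case
      using L2_interleave[OF Te(1) IH(1)] by simp
  qed
  have "(\<lambda>k. amplify_upto k T w n) \<longlonglongrightarrow> amplify T w n" for n
    using amplify_upto_eq[of n _ T w] by (intro tendsto_eventually eventually_sequentiallyI[of "Suc n"]) simp
  then show "amplify T w \<in> L2" and "l2sqnorm (amplify T w) \<le> B * l2sqnorm w"
    using L2_pointwise_limit[where N=0 and u="\<lambda>k. amplify_upto k T w"] upto[OF w] by blast+
qed

lemma amplify_bound:
  assumes H: "closed_subspace H" and T: "bounded_on H T"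
  obtains C where "C \<ge> 0"
    and "\<And>w. w \<in> amp_space H \<Longrightarrow> amplify T w \<in> L2 \<and> l2norm (amplify T w) \<le> C * l2norm w"
proof -
  obtain C where C0: "C \<ge> 0" and C: "\<And>x. x \<in> H \<Longrightarrow> l2norm (T x) \<le> C * l2norm x"
    using bounded_on_normE[OF H T] by blast
  have TC: "T x \<in> L2 \<and> l2sqnorm (T x) \<le> C\<^sup>2 * l2sqnorm x" if x: "x \<in> H" for x
  proof -
    have "T x \<in> L2" and "x \<in> L2"
      using closed_subspace_L2[OF H] bounded_on_mem[OF T x] x by auto
    moreover have "(l2norm (T x))\<^sup>2 \<le> (C * l2norm x)\<^sup>2"
      using C[OF x] l2norm_nonneg[OF \<open>T x \<in> L2\<close>] by (intro power_mono) auto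
    ultimately show ?thesis
      by (simp add: l2sqnorm_eq_square power_mult_distrib)
  qed
  have "amplify T w \<in> L2 \<and> l2norm (amplify T w) \<le> C * l2norm w" if "w \<in> amp_space H" for w
  proof -
    have "amplify T w \<in> L2" and "l2sqnorm (amplify T w) \<le> C\<^sup>2 * l2sqnorm w"
      using amplify_L2_bound[of "C\<^sup>2" H T w, OF zero_le_power2 TC that] by auto
    moreover have "sqrt (C\<^sup>2 * l2sqnorm w) = C * l2norm w"
      using C0 by (simp add: l2norm_eq_sqrt real_sqrt_mult)
    ultimately show ?thesis
      unfolding l2norm_eq_sqrt[of "amplify T w"] by (metis real_sqrt_le_mono)
  qed
  with C0 that show ?thesis
    by blast
qed

lemma amplify_mem:
  assumes "closed_subspace H" and "bounded_on H T" and "w \<in> amp_space H"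
  shows "amplify T w \<in> amp_space H"
  using amplify_bound[OF assms(1,2)] assms(3) bounded_on_mem[OF assms(2)]
  by (auto simp: amp_space_def slice_amplify)

lemma amplify_add:
  assumes T: "bounded_on H T" and x: "x \<in> amp_space H" and y: "y \<in> amp_space H"
  shows "amplify T (x + y) = amplify T x + amplify T y"
proof -
  let ?A = "amp_space H \<times> amp_space H"
  have "(\<lambda>(x, y). amplify T (x + y)) (x, y) = (\<lambda>(x, y). amplify T x + amplify T y) (x, y)"
  proof (rule cseq_eq_coinduct[where A="?A" and \<sigma>="\<lambda>(x, y). (odds x, odds y)"])
    fix a assume "a \<in> ?A"
    then obtain u v where a: "a = (u, v)" "u \<in> amp_space H" "v \<in> amp_space H"
      by blast
    show "(\<lambda>(x, y). (odds x, odds y)) a \<in> ?A"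
      using a amp_space_odds by auto
    show "evens ((\<lambda>(x, y). amplify T (x + y)) a) = evens ((\<lambda>(x, y). amplify T x + amplify T y) a)"
      using a amp_space_evens bounded_on_add[OF T] by (simp add: fun_eq_iff)
    show "odds ((\<lambda>(x, y). amplify T (x + y)) a) = (\<lambda>(x, y). amplify T (x + y)) ((\<lambda>(x, y). (odds x, odds y)) a)"
      "odds ((\<lambda>(x, y). amplify T x + amplify T y) a)
        = (\<lambda>(x, y). amplify T x + amplify T y) ((\<lambda>(x, y). (odds x, odds y)) a)"
      using a by simp_all
  qed (use x y in simp)
  then show ?thesis
    by simp
qed

lemma amplify_csc:
  assumes T: "bounded_on H T" and x: "x \<in> amp_space H"
  shows "amplify T (csc c x) = csc c (amplify T x)"
  by (rule cseq_eq_coinduct[where A="amp_space H" and \<sigma>=odds and F="\<lambda>x. amplify T (csc c x)"])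
    (simp_all only: x amp_space_odds evens_amplify odds_amplify evens_csc odds_csc
      bounded_on_csc[OF T amp_space_evens])

lemma bounded_on_amplify:
  assumes H: "closed_subspace H" and T: "bounded_on H T"
  shows "bounded_on (amp_space H) (amplify T)"
proof -
  obtain C where "C \<ge> 0"
    and C: "\<And>w. w \<in> amp_space H \<Longrightarrow> amplify T w \<in> L2 \<and> l2norm (amplify T w) \<le> C * l2norm w"
    using amplify_bound[OF H T] by metis
  then have "\<forall>w\<in>amp_space H. l2norm (amplify T w) \<le> C * l2norm w"
    by blast
  then show ?thesis
    unfolding bounded_on_def using amplify_mem[OF H T] amplify_add[OF T] amplify_csc[OF T] by blast
qed

lemma amplify_eqI:
  assumes "\<And>w. evens (F w) = evens (G w)"
    and "\<And>w. odds (F w) = F (odds w)" and "\<And>w. odds (G w) = G (odds w)"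
  shows "F w = G w"
  by (rule cseq_eq_coinduct[where A=UNIV and \<sigma>=odds and F=F and G=G]) (use assms in auto)

text \<open>The simplifier would eta-expand \<^const>\<open>csc\<close>, \<^const>\<open>evens\<close> and \<^const>\<open>odds\<close> terms on one side
  only, hence the explicit rewrite sets.\<close>

lemma amplify_ident: "amplify (\<lambda>x. x) w = w"
  by (rule amplify_eqI[where F="amplify (\<lambda>x. x)" and G="\<lambda>w. w"])
    (simp_all only: evens_amplify odds_amplify)

lemma amplify_zero_op: "amplify (\<lambda>x. 0) w = 0"
  by (rule amplify_eqI[where F="amplify (\<lambda>x. 0)" and G="\<lambda>w. 0"])
    (simp_all only: evens_amplify odds_amplify evens_zero odds_zero)

lemma amplify_uminus_op: "amplify (\<lambda>x. - T x) w = - amplify T w"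
  by (rule amplify_eqI[where F="amplify (\<lambda>x. - T x)" and G="\<lambda>w. - amplify T w"])
    (simp_all only: evens_amplify odds_amplify evens_uminus odds_uminus)

lemma amplify_add_op: "amplify (\<lambda>x. T x + S x) w = amplify T w + amplify S w"
  by (rule amplify_eqI[where F="amplify (\<lambda>x. T x + S x)" and G="\<lambda>w. amplify T w + amplify S w"])
    (simp_all only: evens_amplify odds_amplify evens_add odds_add)

lemma amplify_csc_op: "amplify (\<lambda>x. csc c (T x)) w = csc c (amplify T w)"
  by (rule amplify_eqI[where F="amplify (\<lambda>x. csc c (T x))" and G="\<lambda>w. csc c (amplify T w)"])
    (simp_all only: evens_amplify odds_amplify evens_csc odds_csc)

lemma amplify_comp: "amplify T (amplify S w) = amplify (\<lambda>x. T (S x)) w"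
  by (rule amplify_eqI[where F="\<lambda>w. amplify T (amplify S w)" and G="amplify (\<lambda>x. T (S x))"])
    (simp_all only: evens_amplify odds_amplify)

lemma amplify_cong:
  assumes "\<And>x. x \<in> H \<Longrightarrow> T x = S x" and "w \<in> amp_space H"
  shows "amplify T w = amplify S w"
  by (rule cseq_eq_coinduct[where A="amp_space H" and \<sigma>=odds and F="amplify T" and G="amplify S"])
    (use assms amp_space_odds amp_space_evens in auto)

lemma amplify_comp_eq:
  assumes "\<And>x. x \<in> H \<Longrightarrow> T (S x) = R x" and "w \<in> amp_space H"
  shows "amplify T (amplify S w) = amplify R w"
  unfolding amplify_comp by (rule amplify_cong[OF assms])

lemma amplify_commute:
  assumes "\<And>x. x \<in> H \<Longrightarrow> A (B x) = B (A x)" and "w \<in> amp_space H"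
  shows "amplify A (amplify B w) = amplify B (amplify A w)"
  unfolding amplify_comp by (rule amplify_cong[OF assms])

lemma amplify_anticommute:
  assumes "\<And>x. x \<in> H \<Longrightarrow> A (B x) = - B (A x)" and "w \<in> amp_space H"
  shows "amplify A (amplify B w) = - amplify B (amplify A w)"
  unfolding amplify_comp amplify_uminus_op[symmetric] by (rule amplify_cong[OF assms])

lemma odds_pow_apply: "(odds ^^ k) w j = w (2^k * j + (2^k - 1))"
proof (induction k arbitrary: j)
  case (Suc k)
  have "(2::nat)^k > 0"
    by simp
  then have "2^k * (2*j+1) + (2^k - 1) = 2^(Suc k) * j + (2^(Suc k) - (1::nat))"
    by (simp add: algebra_simps)
  then show ?case
    using Suc.IH[of "2*j+1"] by simp
qed simp

lemma l2sqnorm_odds_pow_small: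
  assumes w: "w \<in> L2" and e: "e > 0"
  obtains k where "l2sqnorm ((odds ^^ k) w) < e"
proof -
  let ?f = "\<lambda>n. (cmod (w n))\<^sup>2"
  have sf: "summable ?f"
    using w by (simp add: L2_iff)
  obtain N where N: "\<forall>n\<ge>N. norm (\<Sum>i. ?f (i + n)) < e"
    using suminf_exist_split[OF e sf] by blast
  define m where "m = (2::nat)^N - 1"
  have "m \<ge> N"
    unfolding m_def using less_exp[of N] by linarith
  have "l2sqnorm ((odds ^^ N) w) = suminf ((\<lambda>i. ?f (i + m)) \<circ> (\<lambda>j. 2^N * j))"
    unfolding l2sqnorm_def odds_pow_apply m_def by (simp add: o_def)
  also have "\<dots> \<le> (\<Sum>i. ?f (i + m))"
    by (rule suminf_reindex_mono[OF summable_ignore_initial_segment[OF sf]]) (simp_all add: inj_on_def)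
  also have "\<dots> < e"
    using N \<open>m \<ge> N\<close> by fastforce
  finally show ?thesis
    by (rule that)
qed

lemma l2norm_odds_pow_tendsto_zero:
  assumes w: "w \<in> L2"
  shows "(\<lambda>k. l2norm ((odds ^^ k) w)) \<longlonglongrightarrow> 0"
proof (rule LIMSEQ_I)
  fix e :: real assume "e > 0"
  then obtain N where N: "l2sqnorm ((odds ^^ N) w) < e\<^sup>2"
    using l2sqnorm_odds_pow_small[OF w, of "e\<^sup>2"] by auto
  have "norm (l2norm ((odds ^^ n) w) - 0) < e" if "n \<ge> N" for n
  proof -
    have "(odds ^^ n) w = (odds ^^ (n - N)) ((odds ^^ N) w)"
      using that funpow_add[of "n - N" N odds] by simp
    then have "l2norm ((odds ^^ n) w) \<le> l2norm ((odds ^^ N) w)"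
      using l2norm_odds_pow_le[OF odds_pow_L2[OF w]] by simp
    also have "\<dots> < e"
      using N \<open>e > 0\<close> real_sqrt_less_mono[OF N] by (simp add: l2norm_eq_sqrt)
    finally show ?thesis
      using l2norm_nonneg[OF odds_pow_L2[OF w]] by simp
  qed
  then show "\<exists>N. \<forall>n\<ge>N. norm (l2norm ((odds ^^ n) w) - 0) < e"
    by blast
qed

text \<open>The defect of the adjoint relation is unchanged by deleting the first summand, so it is
  bounded by the norm of arbitrarily far tails.\<close>

lemma l2inner_amplify:
  assumes H: "closed_subspace H" and T: "bounded_on H T" and S: "bounded_on H S"
    and TS: "\<And>u v. u \<in> H \<Longrightarrow> v \<in> H \<Longrightarrow> l2inner (T u) v = l2inner u (S v)"
    and a: "a \<in> amp_space H" and b: "b \<in> amp_space H"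
  shows "l2inner (amplify T a) b = l2inner a (amplify S b)"
proof -
  define D where "D x y = l2inner (amplify T x) y - l2inner x (amplify S y)" for x y
  have L2: "x \<in> L2" "amplify T x \<in> L2" "amplify S x \<in> L2" if "x \<in> amp_space H" for x
    using that amp_space_L2 amplify_mem[OF H T] amplify_mem[OF H S] by auto
  have shift: "D x y = D (odds x) (odds y)" if "x \<in> amp_space H" "y \<in> amp_space H" for x y
    unfolding D_def using that L2 TS[OF amp_space_evens amp_space_evens]
    by (simp add: l2inner_even_odd[of "amplify T x"] l2inner_even_odd[of x])
  have iter: "D a b = D ((odds ^^ k) a) ((odds ^^ k) b)" for k
  proof (induction k)
    case (Suc k)
    then show ?case
      using shift[OF amp_space_odds_pow[OF a] amp_space_odds_pow[OF b], of k]
      by (simp only: funpow.simps comp_apply)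
  qed simp
  obtain K where "K \<ge> 0" and K: "\<And>x y. x \<in> amp_space H \<Longrightarrow> y \<in> amp_space H \<Longrightarrow>
      cmod (D x y) \<le> K * l2norm x * l2norm y"
    unfolding D_def using adjoint_defect_bound[OF closed_subspace_amp_space[OF H]
      bounded_on_amplify[OF H T] bounded_on_amplify[OF H S]] by metis
  have "cmod (D a b) \<le> K * l2norm b * l2norm ((odds ^^ k) a)" for k
  proof -
    have "cmod (D a b) \<le> K * l2norm ((odds ^^ k) a) * l2norm ((odds ^^ k) b)"
      using K[OF amp_space_odds_pow[OF a] amp_space_odds_pow[OF b]] iter[of k] by simp
    also have "\<dots> \<le> K * l2norm ((odds ^^ k) a) * l2norm b"
      using l2norm_odds_pow_le[OF amp_space_L2[OF b], of k] \<open>K \<ge> 0\<close>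
        l2norm_nonneg[OF odds_pow_L2[OF amp_space_L2[OF a]], of k]
      by (intro mult_left_mono) auto
    finally show ?thesis
      by (simp add: ac_simps)
  qed
  moreover have "(\<lambda>k. K * l2norm b * l2norm ((odds ^^ k) a)) \<longlonglongrightarrow> 0"
    using tendsto_mult_right_zero[OF l2norm_odds_pow_tendsto_zero[OF amp_space_L2[OF a]]] by simp
  ultimately have "cmod (D a b) \<le> 0"
    by (intro LIMSEQ_le_const) auto
  then show ?thesis
    unfolding D_def by simp
qed

lemma adj_amplify:
  assumes H: "closed_subspace H" and T: "bounded_on H T" and S: "bounded_on H S"
    and TS: "\<And>x. x \<in> H \<Longrightarrow> adj H T x = S x" and w: "w \<in> amp_space H"
  shows "adj (amp_space H) (amplify T) w = amplify S w"
proof (rule adj_eqI[OF closed_subspace_amp_space[OF H] amplify_mem[OF H S w]])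
  fix x assume "x \<in> amp_space H"
  then show "l2inner (amplify T x) w = l2inner x (amplify S w)"
    using l2inner_eq_if_adj[OF H T TS] by (intro l2inner_amplify[OF H T S _ _ w])
qed

lemma representation_amplify:
  assumes H: "closed_subspace H" and r: "representation scC st H r"
  shows "representation scC st (amp_space H) (\<lambda>a. amplify (r a))"
  unfolding representation_def
proof (intro conjI allI ballI)
  have rb: "bounded_on H (r a)" for a
    using r by (simp add: representation_def)
  fix a b c x
  show "bounded_on (amp_space H) (amplify (r a))"
    by (rule bounded_on_amplify[OF H rb])
  assume x: "x \<in> amp_space H"
  show "amplify (r (a + b)) x = amplify (r a) x + amplify (r b) x"
    unfolding amplify_add_op[symmetric] by (rule amplify_cong[OF _ x]) (use r in \<open>simp add: representation_def\<close>)
  show "amplify (r (scC c a)) x = csc c (amplify (r a) x)"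
    unfolding amplify_csc_op[symmetric] by (rule amplify_cong[OF _ x]) (use r in \<open>simp add: representation_def\<close>)
  show "amplify (r (a * b)) x = amplify (r a) (amplify (r b) x)"
    by (rule amplify_comp_eq[OF _ x, symmetric]) (use r in \<open>simp add: representation_def\<close>)
  show "amplify (r (st a)) x = adj (amp_space H) (amplify (r a)) x"
    by (rule adj_amplify[OF H rb rb _ x, symmetric]) (use r in \<open>simp add: representation_def\<close>)
qed

section \<open>Graded Fredholm modules and the Eilenberg swindle\<close>

locale pgraded_module =
  fixes scC :: "complex \<Rightarrow> 'a::{banach,real_normed_algebra} \<Rightarrow> 'a" and st :: "'a \<Rightarrow> 'a"
    and p :: nat and m :: "'a fmod"
  assumes closed: "closed_subspace (Hs m)"
    and rho: "representation scC st (Hs m) (rho m)"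
    and F_bounded: "bounded_on (Hs m) (Fop m)"
    and gam_bounded: "bounded_on (Hs m) (gam m)"
    and gam_square: "\<And>x. x \<in> Hs m \<Longrightarrow> gam m (gam m x) = x"
    and gam_adj: "\<And>x. x \<in> Hs m \<Longrightarrow> adj (Hs m) (gam m) x = gam m x"
    and gam_rho: "\<And>a x. x \<in> Hs m \<Longrightarrow> gam m (rho m a x) = rho m a (gam m x)"
    and F_gam: "\<And>x. x \<in> Hs m \<Longrightarrow> Fop m (gam m x) = - gam m (Fop m x)"
    and compact_F_square: "\<And>a. compact_on (Hs m) (\<lambda>x. Fop m (Fop m (rho m a x)) - rho m a x)"
    and compact_F_adj: "\<And>a. compact_on (Hs m) (\<lambda>x. Fop m (rho m a x) - adj (Hs m) (Fop m) (rho m a x))"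
    and compact_F_rho: "\<And>a. compact_on (Hs m) (\<lambda>x. Fop m (rho m a x) - rho m a (Fop m x))"
    and eps_bounded: "\<And>j. j < p \<Longrightarrow> bounded_on (Hs m) (eps m j)"
    and eps_gam: "\<And>j x. j < p \<Longrightarrow> x \<in> Hs m \<Longrightarrow> eps m j (gam m x) = - gam m (eps m j x)"
    and eps_adj: "\<And>j x. j < p \<Longrightarrow> x \<in> Hs m \<Longrightarrow> adj (Hs m) (eps m j) x = - eps m j x"
    and eps_square: "\<And>j x. j < p \<Longrightarrow> x \<in> Hs m \<Longrightarrow> eps m j (eps m j x) = - x"
    and eps_anticommute: "\<And>i j x. i < p \<Longrightarrow> j < p \<Longrightarrow> i \<noteq> j \<Longrightarrow> x \<in> Hs m \<Longrightarrow>
      eps m i (eps m j x) + eps m j (eps m i x) = 0"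
    and eps_F: "\<And>j x. j < p \<Longrightarrow> x \<in> Hs m \<Longrightarrow> eps m j (Fop m x) = Fop m (eps m j x)"
    and eps_rho: "\<And>j a x. j < p \<Longrightarrow> x \<in> Hs m \<Longrightarrow> eps m j (rho m a x) = rho m a (eps m j x)"

lemma pgraded_module_iff: "pgraded_module scC st p m \<longleftrightarrow> pgraded_fmod scC st p m"
  unfolding pgraded_module_def pgraded_fmod_def Let_def by (intro iffI conjI allI ballI impI; elim conjE; simp)

lemma (in pgraded_module) pgraded_update_Fop:
  assumes "bounded_on (Hs m) G"
    and "\<And>x. x \<in> Hs m \<Longrightarrow> G (gam m x) = - gam m (G x)"
    and "\<And>a. compact_on (Hs m) (\<lambda>x. G (G (rho m a x)) - rho m a x)"
    and "\<And>a. compact_on (Hs m) (\<lambda>x. G (rho m a x) - adj (Hs m) G (rho m a x))"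
    and "\<And>a. compact_on (Hs m) (\<lambda>x. G (rho m a x) - rho m a (G x))"
    and "\<And>j x. j < p \<Longrightarrow> x \<in> Hs m \<Longrightarrow> eps m j (G x) = G (eps m j x)"
  shows "pgraded_module scC st p (m\<lparr>Fop := G\<rparr>)"
  using pgraded_module_axioms assms unfolding pgraded_module_def by simp

definition amplify_fmod :: "'a fmod \<Rightarrow> 'a fmod" where
  "amplify_fmod m = \<lparr>Hs = amp_space (Hs m), gam = amplify (gam m), rho = (\<lambda>a. amplify (rho m a)),
     Fop = amplify (Fop m), eps = (\<lambda>j. amplify (eps m j))\<rparr>"

lemma amplify_fmod_simps[simp]:
  "Hs (amplify_fmod m) = amp_space (Hs m)" "gam (amplify_fmod m) = amplify (gam m)"
  "rho (amplify_fmod m) = (\<lambda>a. amplify (rho m a))" "Fop (amplify_fmod m) = amplify (Fop m)"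
  "eps (amplify_fmod m) = (\<lambda>j. amplify (eps m j))"
  by (simp_all add: amplify_fmod_def)

lemma dsum_amplify_fmod: "closed_subspace (Hs m) \<Longrightarrow> dsum m (amplify_fmod m) = amplify_fmod m"
  unfolding dsum_def by (simp add: interleave_amp_space dsum_op_amplify amplify_fmod_def)

context pgraded_module
begin

lemma pgraded_amplify_fmod:
  assumes F_square: "\<And>x. x \<in> Hs m \<Longrightarrow> Fop m (Fop m x) = x"
    and F_adj: "\<And>x. x \<in> Hs m \<Longrightarrow> adj (Hs m) (Fop m) x = Fop m x"
    and F_rho_commute: "\<And>a x. x \<in> Hs m \<Longrightarrow> Fop m (rho m a x) = rho m a (Fop m x)"
  shows "pgraded_module scC st p (amplify_fmod m)"
proof (unfold_locales, unfold amplify_fmod_simps)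
  have rho_bounded: "bounded_on (Hs m) (rho m a)" for a
    using rho by (simp add: representation_def)
  note amp_mem = amplify_mem[OF closed]
  fix a i j x
  show "closed_subspace (amp_space (Hs m))"
    by (rule closed_subspace_amp_space[OF closed])
  show "representation scC st (amp_space (Hs m)) (\<lambda>a. amplify (rho m a))"
    by (rule representation_amplify[OF closed rho])
  show "bounded_on (amp_space (Hs m)) (amplify (Fop m))"
    by (rule bounded_on_amplify[OF closed F_bounded])
  show "bounded_on (amp_space (Hs m)) (amplify (gam m))"
    by (rule bounded_on_amplify[OF closed gam_bounded])
  show "j < p \<Longrightarrow> bounded_on (amp_space (Hs m)) (amplify (eps m j))"
    by (rule bounded_on_amplify[OF closed eps_bounded])
  show "compact_on (amp_space (Hs m))
      (\<lambda>x. amplify (Fop m) (amplify (Fop m) (amplify (rho m a) x)) - amplify (rho m a) x)"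
    by (rule compact_on_zero[OF closed_subspace_amp_space[OF closed]])
      (simp add: amplify_comp_eq[of "Hs m" "Fop m" "Fop m" "\<lambda>x. x", OF F_square] amplify_ident
        amp_mem[OF rho_bounded])
  show "compact_on (amp_space (Hs m))
      (\<lambda>x. amplify (Fop m) (amplify (rho m a) x)
        - adj (amp_space (Hs m)) (amplify (Fop m)) (amplify (rho m a) x))"
    by (rule compact_on_zero[OF closed_subspace_amp_space[OF closed]])
      (simp add: adj_amplify[OF closed F_bounded F_bounded F_adj] amp_mem[OF rho_bounded])
  show "compact_on (amp_space (Hs m))
      (\<lambda>x. amplify (Fop m) (amplify (rho m a) x) - amplify (rho m a) (amplify (Fop m) x))"
    by (rule compact_on_zero[OF closed_subspace_amp_space[OF closed]])
      (simp add: amplify_commute[of "Hs m" "Fop m" "rho m a", OF F_rho_commute])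
  assume x: "x \<in> amp_space (Hs m)"
  show "amplify (gam m) (amplify (gam m) x) = x"
    using amplify_comp_eq[of "Hs m" "gam m" "gam m" "\<lambda>x. x", OF gam_square x] by (simp add: amplify_ident)
  show "adj (amp_space (Hs m)) (amplify (gam m)) x = amplify (gam m) x"
    by (rule adj_amplify[OF closed gam_bounded gam_bounded gam_adj x])
  show "amplify (gam m) (amplify (rho m a) x) = amplify (rho m a) (amplify (gam m) x)"
    by (rule amplify_commute[of "Hs m" "gam m" "rho m a", OF gam_rho x])
  show "amplify (Fop m) (amplify (gam m) x) = - amplify (gam m) (amplify (Fop m) x)"
    by (rule amplify_anticommute[of "Hs m" "Fop m" "gam m", OF F_gam x])
  assume j: "j < p"
  show "amplify (eps m j) (amplify (gam m) x) = - amplify (gam m) (amplify (eps m j) x)"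
    by (rule amplify_anticommute[of "Hs m" "eps m j" "gam m", OF eps_gam[OF j] x])
  show "adj (amp_space (Hs m)) (amplify (eps m j)) x = - amplify (eps m j) x"
    using adj_amplify[OF closed eps_bounded[OF j] bounded_on_uminus[OF closed eps_bounded[OF j]] eps_adj[OF j] x]
    by (simp add: amplify_uminus_op)
  show "amplify (eps m j) (amplify (eps m j) x) = - x"
    using amplify_comp_eq[of "Hs m" "eps m j" "eps m j" "\<lambda>x. - x", OF eps_square[OF j] x]
    by (simp add: amplify_uminus_op amplify_ident)
  show "amplify (eps m j) (amplify (Fop m) x) = amplify (Fop m) (amplify (eps m j) x)"
    by (rule amplify_commute[of "Hs m" "eps m j" "Fop m", OF eps_F[OF j] x])
  show "amplify (eps m j) (amplify (rho m a) x) = amplify (rho m a) (amplify (eps m j) x)"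
    by (rule amplify_commute[of "Hs m" "eps m j" "rho m a", OF eps_rho[OF j] x])
  assume "i < p" "i \<noteq> j"
  then have "amplify (eps m i) (amplify (eps m j) x) + amplify (eps m j) (amplify (eps m i) x)
      = amplify (\<lambda>x. 0) x"
    unfolding amplify_comp amplify_add_op[symmetric] using eps_anticommute[OF _ j]
    by (intro amplify_cong[OF _ x]) simp
  then show "amplify (eps m i) (amplify (eps m j) x) + amplify (eps m j) (amplify (eps m i) x) = 0"
    by (simp only: amplify_zero_op)
qed

text \<open>Eilenberg swindle: a degenerate module is absorbed by its infinite amplification.\<close>

lemma Kclass_zero_if_degenerate:
  assumes "\<And>x. x \<in> Hs m \<Longrightarrow> Fop m (Fop m x) = x"
    and "\<And>x. x \<in> Hs m \<Longrightarrow> adj (Hs m) (Fop m) x = Fop m x"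
    and "\<And>a x. x \<in> Hs m \<Longrightarrow> Fop m (rho m a x) = rho m a (Fop m x)"
  shows "Kclass_zero scC st p m"
proof -
  have m: "pgraded_fmod scC st p m" and amp: "pgraded_fmod scC st p (amplify_fmod m)"
    using pgraded_module_axioms pgraded_amplify_fmod[OF assms] by (simp_all add: pgraded_module_iff)
  have "gen (dsum m (amplify_fmod m)) - gen m - gen (amplify_fmod m) \<in> Krel scC st p"
    by (rule Krel.dsum[OF m amp])
  then have "- gen m \<in> Krel scC st p"
    by (simp add: dsum_amplify_fmod[OF closed])
  then have "- (- gen m) \<in> Krel scC st p"
    by (rule Krel.neg)
  then show ?thesis
    by (simp add: Kclass_zero_def)
qed

end

section \<open>The rotation homotopy\<close>

definition rotation :: "op \<Rightarrow> op \<Rightarrow> real \<Rightarrow> op" where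
  "rotation F E t = (\<lambda>x. csc (of_real (cos (t * pi / 2))) (F x) + csc (of_real (sin (t * pi / 2))) (E x))"

lemma rotation_0: "rotation F E 0 = F"
  by (simp add: rotation_def fun_eq_iff)

lemma rotation_1: "rotation F E 1 = E"
  by (simp add: rotation_def fun_eq_iff)

lemma abs_cos_diff_le: "\<bar>cos u - cos v\<bar> \<le> \<bar>u - v\<bar>" for u v :: real
proof -
  have "\<bar>cos u - cos v\<bar> = 2 * (\<bar>sin ((u + v) / 2)\<bar> * \<bar>sin ((v - u) / 2)\<bar>)"
    unfolding cos_diff_cos by (simp add: abs_mult)
  also have "\<dots> \<le> 2 * (1 * \<bar>(v - u) / 2\<bar>)"
    by (intro mult_left_mono mult_mono abs_sin_le_one abs_sin_x_le_abs_x) auto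
  finally show ?thesis
    by simp
qed

lemma abs_sin_diff_le: "\<bar>sin u - sin v\<bar> \<le> \<bar>u - v\<bar>" for u v :: real
proof -
  have "\<bar>sin u - sin v\<bar> = 2 * (\<bar>sin ((u - v) / 2)\<bar> * \<bar>cos ((u + v) / 2)\<bar>)"
    unfolding sin_diff_sin by (simp add: abs_mult)
  also have "\<dots> \<le> 2 * (\<bar>(u - v) / 2\<bar> * 1)"
    by (intro mult_left_mono mult_mono abs_cos_le_one abs_sin_x_le_abs_x) auto
  finally show ?thesis
    by simp
qed

lemma rotation_lipschitz:
  assumes H: "closed_subspace H" and F: "bounded_on H F" and E: "bounded_on H E"
  obtains K where "K \<ge> 0"
    and "\<And>s t x. x \<in> H \<Longrightarrow> l2norm (rotation F E s x - rotation F E t x) \<le> K * \<bar>s - t\<bar> * l2norm x"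
proof -
  obtain CF where "CF \<ge> 0" and CF: "\<And>x. x \<in> H \<Longrightarrow> l2norm (F x) \<le> CF * l2norm x"
    using bounded_on_normE[OF H F] by blast
  obtain CE where "CE \<ge> 0" and CE: "\<And>x. x \<in> H \<Longrightarrow> l2norm (E x) \<le> CE * l2norm x"
    using bounded_on_normE[OF H E] by blast
  have "l2norm (rotation F E s x - rotation F E t x) \<le> (CF + CE) * (pi / 2) * \<bar>s - t\<bar> * l2norm x"
    if x: "x \<in> H" for s t x
  proof -
    define c where "c = cos (s * pi / 2) - cos (t * pi / 2)"
    define d where "d = sin (s * pi / 2) - sin (t * pi / 2)"
    have FL: "F x \<in> L2" and EL: "E x \<in> L2"
      using closed_subspace_L2[OF H] bounded_on_mem[OF F x] bounded_on_mem[OF E x] by auto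
    have "s * pi / 2 - t * pi / 2 = (s - t) * (pi / 2)"
      by (simp add: algebra_simps)
    then have "\<bar>s * pi / 2 - t * pi / 2\<bar> = \<bar>s - t\<bar> * (pi / 2)"
      by (simp only: abs_mult) simp
    then have cd: "\<bar>c\<bar> \<le> \<bar>s - t\<bar> * (pi / 2)" "\<bar>d\<bar> \<le> \<bar>s - t\<bar> * (pi / 2)"
      unfolding c_def d_def by (metis abs_cos_diff_le abs_sin_diff_le)+
    have "rotation F E s x - rotation F E t x = csc (of_real c) (F x) + csc (of_real d) (E x)"
      unfolding rotation_def c_def d_def by (simp add: fun_eq_iff algebra_simps)
    then have "l2norm (rotation F E s x - rotation F E t x) \<le> \<bar>c\<bar> * l2norm (F x) + \<bar>d\<bar> * l2norm (E x)"
      using l2norm_triangle[OF L2_csc[OF FL, of "of_real c"] L2_csc[OF EL, of "of_real d"]]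
      by (simp add: l2norm_csc FL EL)
    also have "\<dots> \<le> (\<bar>s - t\<bar> * (pi / 2)) * (CF * l2norm x) + (\<bar>s - t\<bar> * (pi / 2)) * (CE * l2norm x)"
      using CF[OF x] CE[OF x] cd l2norm_nonneg[OF FL] l2norm_nonneg[OF EL]
      by (intro add_mono mult_mono) auto
    finally show ?thesis
      by (simp add: algebra_simps)
  qed
  with that[of "(CF + CE) * (pi / 2)"] \<open>CF \<ge> 0\<close> \<open>CE \<ge> 0\<close> show ?thesis
    by simp
qed

lemma rotation_square_identity:
  fixes c s p q w :: complex
  assumes "c * c + s * s = 1"
  shows "c * (c * p + s * q) + s * (s * w - c * q) - w = c * c * (p - w)"
  using assms by algebra

locale odd_symmetric_module = pgraded_module +
  fixes E :: op
  assumes E_bounded: "bounded_on (Hs m) E"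
    and E_adj: "\<And>x. x \<in> Hs m \<Longrightarrow> adj (Hs m) E x = E x"
    and E_square: "\<And>x. x \<in> Hs m \<Longrightarrow> E (E x) = x"
    and E_gam: "\<And>x. x \<in> Hs m \<Longrightarrow> E (gam m x) = - gam m (E x)"
    and E_rho: "\<And>a x. x \<in> Hs m \<Longrightarrow> E (rho m a x) = rho m a (E x)"
    and E_eps: "\<And>j x. j < p \<Longrightarrow> x \<in> Hs m \<Longrightarrow> E (eps m j x) = eps m j (E x)"
    and E_F: "\<And>x. x \<in> Hs m \<Longrightarrow> E (Fop m x) = - Fop m (E x)"
begin

lemma pgraded_lincomb:
  fixes a b :: real
  assumes ab: "a\<^sup>2 + b\<^sup>2 = 1"
  defines "G \<equiv> \<lambda>x. csc (of_real a) (Fop m x) + csc (of_real b) (E x)"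
  shows "pgraded_module scC st p (m\<lparr>Fop := G\<rparr>)"
proof (rule pgraded_update_Fop)
  let ?H = "Hs m" and ?F = "Fop m"
  have rho_bounded: "bounded_on ?H (rho m a')" for a'
    using rho by (simp add: representation_def)
  have HL: "x \<in> ?H \<Longrightarrow> x \<in> L2" for x
    using closed_subspace_L2[OF closed] .
  note FH = bounded_on_mem[OF F_bounded] and EH = bounded_on_mem[OF E_bounded]
    and rhoH = bounded_on_mem[OF rho_bounded]
  have lin: "T (G x) = csc (of_real a) (T (?F x)) + csc (of_real b) (T (E x))"
    if "bounded_on ?H T" "x \<in> ?H" for T x
    unfolding G_def using that FH EH by (intro bounded_on_lincomb_apply[OF closed])
  show "bounded_on ?H G"
    unfolding G_def by (rule bounded_on_lincomb[OF closed F_bounded E_bounded])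
  show "G (gam m x) = - gam m (G x)" if "x \<in> ?H" for x
    using lin[OF gam_bounded that] F_gam[OF that] E_gam[OF that] by (simp add: G_def fun_eq_iff)
  show "eps m j (G x) = G (eps m j x)" if "j < p" "x \<in> ?H" for j x
    using lin[OF eps_bounded[OF that(1)] that(2)] eps_F[OF that] E_eps[OF that] by (simp add: G_def)
  show "compact_on ?H (\<lambda>x. G (G (rho m a' x)) - rho m a' x)" for a'
  proof (rule compact_on_csc[OF closed compact_F_square, where c="of_real (a * a)"])
    fix x assume "x \<in> ?H"
    then have u: "rho m a' x \<in> ?H"
      by (rule rhoH)
    then show "?F (?F (rho m a' x)) - rho m a' x \<in> L2"
      using HL FH by (simp add: L2_diff)
    have "(of_real a * of_real a + of_real b * of_real b :: complex) = 1"
      using ab by (simp add: power2_eq_square flip: of_real_mult of_real_add)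
    then show "G (G (rho m a' x)) - rho m a' x = csc (of_real (a * a)) (?F (?F (rho m a' x)) - rho m a' x)"
      using lin[OF F_bounded u] lin[OF E_bounded u] E_F[OF u] E_square[OF u]
      by (simp add: G_def fun_eq_iff rotation_square_identity)
  qed
  have adj_G: "adj ?H G y = csc (of_real a) (adj ?H ?F y) + csc (of_real b) (E y)" if "y \<in> ?H" for y
    unfolding G_def using adj_lincomb[OF closed F_bounded E_bounded that] E_adj[OF that] by simp
  show "compact_on ?H (\<lambda>x. G (rho m a' x) - adj ?H G (rho m a' x))" for a'
  proof (rule compact_on_csc[OF closed compact_F_adj, where c="of_real a"])
    fix x assume "x \<in> ?H"
    then have u: "rho m a' x \<in> ?H"
      by (rule rhoH)
    then show "?F (rho m a' x) - adj ?H ?F (rho m a' x) \<in> L2"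
      using HL FH adj_mem[OF closed F_bounded] by (simp add: L2_diff)
    show "G (rho m a' x) - adj ?H G (rho m a' x) = csc (of_real a) (?F (rho m a' x) - adj ?H ?F (rho m a' x))"
      unfolding adj_G[OF u] by (simp add: G_def fun_eq_iff algebra_simps)
  qed
  show "compact_on ?H (\<lambda>x. G (rho m a' x) - rho m a' (G x))" for a'
  proof (rule compact_on_csc[OF closed compact_F_rho, where c="of_real a"])
    fix x assume x: "x \<in> ?H"
    then show "?F (rho m a' x) - rho m a' (?F x) \<in> L2"
      using HL FH rhoH by (simp add: L2_diff)
    show "G (rho m a' x) - rho m a' (G x) = csc (of_real a) (?F (rho m a' x) - rho m a' (?F x))"
      using lin[OF rho_bounded x] E_rho[OF x] by (simp add: G_def fun_eq_iff algebra_simps)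
  qed
qed

lemma pgraded_rotation: "pgraded_fmod scC st p (m\<lparr>Fop := rotation (Fop m) E t\<rparr>)"
  using pgraded_lincomb[of "cos (t * pi / 2)" "sin (t * pi / 2)"]
  by (simp add: pgraded_module_iff rotation_def sin_cos_squared_add2)

lemma homotopic_to_E: "op_homotopic scC st p m (m\<lparr>Fop := E\<rparr>)"
  unfolding op_homotopic_def
proof (intro conjI exI[of _ "rotation (Fop m) E"])
  show "\<forall>t\<in>{0..1}. pgraded_fmod scC st p (m\<lparr>Fop := rotation (Fop m) E t\<rparr>)"
    using pgraded_rotation by blast
  show "\<forall>x\<in>Hs m. rotation (Fop m) E 0 x = Fop m x \<and> rotation (Fop m) E 1 x = Fop (m\<lparr>Fop := E\<rparr>) x"
    by (simp add: rotation_0 rotation_1)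
  obtain K where "K \<ge> 0" and K: "\<And>s t x. x \<in> Hs m \<Longrightarrow>
      l2norm (rotation (Fop m) E s x - rotation (Fop m) E t x) \<le> K * \<bar>s - t\<bar> * l2norm x"
    using rotation_lipschitz[OF closed F_bounded E_bounded] by blast
  show "\<forall>t\<in>{0..1}. \<forall>e>0. \<exists>d>0. \<forall>s\<in>{0..1}. \<bar>s - t\<bar> < d \<longrightarrow>
      (\<forall>x\<in>Hs m. l2norm (rotation (Fop m) E s x - rotation (Fop m) E t x) \<le> e * l2norm x)"
  proof (intro ballI allI impI)
    fix t e :: real assume "e > 0"
    have "l2norm (rotation (Fop m) E s x - rotation (Fop m) E t x) \<le> e * l2norm x"
      if "\<bar>s - t\<bar> < e / (K + 1)" and x: "x \<in> Hs m" for s x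
    proof -
      have "K * \<bar>s - t\<bar> \<le> (K + 1) * (e / (K + 1))"
        using that \<open>K \<ge> 0\<close> by (intro mult_mono) auto
      also have "\<dots> = e"
        using \<open>K \<ge> 0\<close> by simp
      finally have "K * \<bar>s - t\<bar> * l2norm x \<le> e * l2norm x"
        using l2norm_nonneg[OF closed_subspace_L2[OF closed x]] by (rule mult_right_mono)
      with K[OF x] show ?thesis
        by (rule order_trans)
    qed
    then show "\<exists>d>0. \<forall>s\<in>{0..1}. \<bar>s - t\<bar> < d \<longrightarrow>
        (\<forall>x\<in>Hs m. l2norm (rotation (Fop m) E s x - rotation (Fop m) E t x) \<le> e * l2norm x)"
      using \<open>e > 0\<close> \<open>K \<ge> 0\<close> by (intro exI[of _ "e / (K + 1)"]) auto
  qed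
qed simp_all

lemma Kclass_zero: "Kclass_zero scC st p m"
proof -
  let ?m' = "m\<lparr>Fop := E\<rparr>"
  have m: "pgraded_fmod scC st p m" and m': "pgraded_fmod scC st p ?m'"
    using pgraded_module_axioms pgraded_rotation[of 1] by (simp_all add: pgraded_module_iff rotation_1)
  have "gen m - gen ?m' \<in> Krel scC st p"
    by (rule Krel.homot[OF m m' homotopic_to_E])
  moreover have "gen ?m' \<in> Krel scC st p"
    using pgraded_module.Kclass_zero_if_degenerate[of scC st p ?m'] m' E_square E_adj E_rho
    by (simp add: pgraded_module_iff Kclass_zero_def)
  ultimately have "(gen m - gen ?m') + gen ?m' \<in> Krel scC st p"
    by (rule Krel.add)
  then show ?thesis
    by (simp add: Kclass_zero_def)
qed

end

theorem mainTheorem1: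
  fixes scC :: "complex \<Rightarrow> 'a::{banach,real_normed_algebra} \<Rightarrow> 'a"
    and st :: "'a \<Rightarrow> 'a" and p :: nat and m :: "'a fmod" and E :: op
  assumes "cstar_algebra scC st"
    and "separable_set (UNIV :: 'a set)"
    and "pgraded_fmod scC st p m"
    and "bounded_on (Hs m) E"
    and "\<forall>x\<in>Hs m. adj (Hs m) E x = E x"
    and "\<forall>x\<in>Hs m. E (E x) = x"
    and "\<forall>x\<in>Hs m. E (gam m x) = - gam m (E x)"
    and "\<forall>a. \<forall>x\<in>Hs m. E (rho m a x) = rho m a (E x)"
    and "\<forall>j<p. \<forall>x\<in>Hs m. E (eps m j x) = eps m j (E x)"
    and "\<forall>x\<in>Hs m. E (Fop m x) = - Fop m (E x)"
  shows "Kclass_zero scC st p m"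
proof -
  interpret odd_symmetric_module scC st p m E
    using assms(3-10) by (simp add: odd_symmetric_module_def odd_symmetric_module_axioms_def pgraded_module_iff)
  show ?thesis
    by (rule Kclass_zero)
qed

end
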